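(* Let $m\in\mathbb{N}$ and let $T$ be a $G$-spaced star with center $r$, with space $V_r$ and basis $B_r$ of cardinality $k$, and leaves $[m]$ with spaces $V_v$ ($v\in[m]$). Let $V=K[G]^n$ for some $n\in\mathbb{N}$ with $n>k$, and let $B=\{gf_i: g\in G,\ i\in[n]\}$ where $f_i$ is the $i$-th standard basis vector of $K[G]^n$. Let $T_m$ be the $G$-spaced star with the same center $(V_r,B_r)$ and leaves $[m]$, each leaf carrying $V$ with basis $B$, and let $\mathcal{X}_m=\mathcal{X}(T_m)$. If $\mathcal{X}_m$ is defined by polynomials of degree at most $D$, then so is $\mathcal{X}(T)$.
   Context: $G$ is a finite Abelian group, $K$ an infinite field over which every finite-dimensional $G$-representation splits into one-dimensional irreducibles; $K[G]$ is the regular representation, with $G$ acting on $K[G]^n$ diagonally. A $G$-spaced star with center $r$ and leaves $[m]$ assigns to each vertex $v$ a finite-dimensional $G$-representation $V_v$ with a distinguished basis $B_v$ permuted by $G$ (and the symmetric bilinear form making $B_v$ orthonormal). $L(T)=\bigotimes_{v\in[m]}V_v$. A $G$-representation of $T$ is a tuple of $G$-invariant elements $A_{rv}=\sum_{b\in B_r}b\otimes a_{b,v}\in V_r\otimes V_v$, $v\in[m]$; the equivariant model $\mathcal{X}(T)\subseteq L(T)$ is the Zariski closure of the set of all tensors $\sum_{b\in B_r}\bigotimes_{v\in[m]}a_{b,v}$. *)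

theory Defs
  imports "HOL-Algebra.Group_Action" "HOL-Library.FuncSet"
begin

definition monoms :: "'i set \<Rightarrow> ('i \<Rightarrow> nat) set" where
  "monoms I = {\<alpha>. \<forall>i. i \<notin> I \<longrightarrow> \<alpha> i = 0}"

definition is_mpoly :: "'i set \<Rightarrow> (('i \<Rightarrow> nat) \<Rightarrow> 'k::comm_ring_1) \<Rightarrow> bool" where
  "is_mpoly I p \<longleftrightarrow> finite {\<alpha>. p \<alpha> \<noteq> 0} \<and> (\<forall>\<alpha>. p \<alpha> \<noteq> 0 \<longrightarrow> \<alpha> \<in> monoms I)"

definition mpoly_deg_le :: "'i set \<Rightarrow> nat \<Rightarrow> (('i \<Rightarrow> nat) \<Rightarrow> 'k::comm_ring_1) \<Rightarrow> bool" where
  "mpoly_deg_le I D p \<longleftrightarrow> is_mpoly I p \<and> (\<forall>\<alpha>. p \<alpha> \<noteq> 0 \<longrightarrow> sum \<alpha> I \<le> D)"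

definition mpoly_eval :: "'i set \<Rightarrow> (('i \<Rightarrow> nat) \<Rightarrow> 'k::comm_ring_1) \<Rightarrow> ('i \<Rightarrow> 'k) \<Rightarrow> 'k" where
  "mpoly_eval I p x = (\<Sum>\<alpha>\<in>{\<alpha>. p \<alpha> \<noteq> 0}. p \<alpha> * (\<Prod>i\<in>I. x i ^ \<alpha> i))"

definition aff_space :: "'i set \<Rightarrow> ('i \<Rightarrow> 'k::zero) set" where
  "aff_space I = {x. \<forall>i. i \<notin> I \<longrightarrow> x i = 0}"

definition zero_set :: "'i set \<Rightarrow> (('i \<Rightarrow> nat) \<Rightarrow> 'k::comm_ring_1) set \<Rightarrow> ('i \<Rightarrow> 'k) set" where
  "zero_set I P = {x \<in> aff_space I. \<forall>p\<in>P. mpoly_eval I p x = 0}"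

definition zariski_closure :: "'i set \<Rightarrow> ('i \<Rightarrow> 'k::comm_ring_1) set \<Rightarrow> ('i \<Rightarrow> 'k) set" where
  "zariski_closure I S =
     \<Inter> {zero_set I P | P. (\<forall>p\<in>P. is_mpoly I p) \<and> S \<subseteq> zero_set I P}"

definition defined_by_deg_le :: "'i set \<Rightarrow> ('i \<Rightarrow> 'k::comm_ring_1) set \<Rightarrow> nat \<Rightarrow> bool" where
  "defined_by_deg_le I X D \<longleftrightarrow>
     (\<exists>P. (\<forall>p\<in>P. mpoly_deg_le I D p) \<and> X = zero_set I P)"

text \<open>Each vertex v carries the permutation representation V_v = K^{B_v} of a finite G-set B_v.
The center has G-set Br with action phir; leaf v < m has G-set Bl v with action phil v.
L(T) = tensor product of the V_v (v in [m] = {..<m}) is K^(PiE {..<m} Bl).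
A G-representation of T is a family A v :: Br x Bl v -> K of G-invariant elements of
V_r (x) V_v, i.e. A v (g.b) (g.c) = A v b c; the associated tensor has coordinate
(sum over b in Br of prod over v<m of A v b (c v)) at the basis tensor c.\<close>

definition star_tensors ::
  "('g, 'z) monoid_scheme \<Rightarrow> 'c set \<Rightarrow> ('g \<Rightarrow> 'c \<Rightarrow> 'c) \<Rightarrow> nat \<Rightarrow> (nat \<Rightarrow> 'b set)
     \<Rightarrow> (nat \<Rightarrow> 'g \<Rightarrow> 'b \<Rightarrow> 'b) \<Rightarrow> ((nat \<Rightarrow> 'b) \<Rightarrow> 'k::comm_ring_1) set" where
  "star_tensors G Br phir m Bl phil =
     {(\<lambda>c. if c \<in> Pi\<^sub>E {..<m} Bl then (\<Sum>b\<in>Br. \<Prod>v<m. A v b (c v)) else 0) | A.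
        \<forall>v<m. \<forall>g\<in>carrier G. \<forall>b\<in>Br. \<forall>c\<in>Bl v.
           A v (phir g b) (phil v g c) = A v b c}"

definition equivariant_model ::
  "('g, 'z) monoid_scheme \<Rightarrow> 'c set \<Rightarrow> ('g \<Rightarrow> 'c \<Rightarrow> 'c) \<Rightarrow> nat \<Rightarrow> (nat \<Rightarrow> 'b set)
     \<Rightarrow> (nat \<Rightarrow> 'g \<Rightarrow> 'b \<Rightarrow> 'b) \<Rightarrow> ((nat \<Rightarrow> 'b) \<Rightarrow> 'k::comm_ring_1) set" where
  "equivariant_model G Br phir m Bl phil =
     zariski_closure (Pi\<^sub>E {..<m} Bl) (star_tensors G Br phir m Bl phil)"

text \<open>Leaf space K[G]^n with basis {g f_i}: basis elements are pairs (g, i), g in G, i < n,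
with G acting by left multiplication on the first component.\<close>

definition regn_basis :: "('g, 'z) monoid_scheme \<Rightarrow> nat \<Rightarrow> ('g \<times> nat) set" where
  "regn_basis G n = carrier G \<times> {..<n}"

definition regn_action :: "('g, 'z) monoid_scheme \<Rightarrow> 'g \<Rightarrow> 'g \<times> nat \<Rightarrow> 'g \<times> nat" where
  "regn_action G g p = (g \<otimes>\<^bsub>G\<^esub> fst p, snd p)"

definition is_mat_rep :: "('g, 'z) monoid_scheme \<Rightarrow> nat \<Rightarrow> ('g \<Rightarrow> nat \<Rightarrow> nat \<Rightarrow> 'k::field) \<Rightarrow> bool" where
  "is_mat_rep G n \<rho> \<longleftrightarrow>
     (\<forall>g\<in>carrier G. \<forall>h\<in>carrier G. \<forall>i<n. \<forall>j<n.
        \<rho> (g \<otimes>\<^bsub>G\<^esub> h) i j = (\<Sum>l<n. \<rho> g i l * \<rho> h l j)) \<and>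
     (\<forall>i<n. \<forall>j<n. \<rho> \<one>\<^bsub>G\<^esub> i j = (if i = j then 1 else 0))"

text \<open>K^n splits as a direct sum of one-dimensional subrepresentations: there is a basis
v_0..v_{n-1} (linearly independent n vectors) each spanning a G-stable line.\<close>
definition splits_1dim :: "('g, 'z) monoid_scheme \<Rightarrow> nat \<Rightarrow> ('g \<Rightarrow> nat \<Rightarrow> nat \<Rightarrow> 'k::field) \<Rightarrow> bool" where
  "splits_1dim G n \<rho> \<longleftrightarrow>
     (\<exists>w :: nat \<Rightarrow> nat \<Rightarrow> 'k.
        (\<forall>c. (\<forall>i<n. (\<Sum>j<n. c j * w j i) = 0) \<longrightarrow> (\<forall>j<n. c j = 0)) \<and>
        (\<forall>j<n. \<forall>g\<in>carrier G. \<exists>e. \<forall>i<n. (\<Sum>l<n. \<rho> g i l * w j l) = e * w j i))"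

end

theory Submission
  imports Defs "Jordan_Normal_Form.Determinant"
begin

text \<open>
  A point \<open>x\<close> of \<open>L(T)\<close> lies in \<open>\<X>(T)\<close> as soon as all its pushforwards along equivariant maps
  \<open>V\<^sub>v \<rightarrow> K[G]\<^sup>n\<close> (\<open>v \<in> [m]\<close>) lie in \<open>\<X>(T\<^sub>m)\<close>; the converse holds because equivariant tensor
  maps send star tensors to star tensors. Pulling the equations of \<open>\<X>(T\<^sub>m)\<close> back along these
  linear maps therefore gives equations of \<open>\<X>(T)\<close> of the same degree.

  For the first claim, pushing \<open>x\<close> forward along maps that read off \<open>G\<close>-orbits of basis tensors
  shows that \<open>x\<close> is \<open>G\<close>-invariant, and along maps that read off \<open>k + 1\<close> basis vectors at a leaf
  shows that every flattening of \<open>x\<close> at a leaf has rank at most \<open>k\<close>, since \<open>(k+1)\<close>-minors vanish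
  on star tensors. A rank factorisation of the flattening at \<open>v\<close> through \<open>K\<^sup>r\<close>, \<open>r \<le> k < n\<close>,
  averaged over \<open>G\<close> (possible since \<open>|G|\<close> is invertible in \<open>K\<close>, as the regular representation
  splits), yields equivariant maps \<open>\<phi>\<^sub>v : V\<^sub>v \<rightarrow> K[G]\<^sup>n\<close> and \<open>\<psi>\<^sub>v : K[G]\<^sup>n \<rightarrow> V\<^sub>v\<close> with
  \<open>(\<Otimes>\<psi>\<^sub>v) (\<Otimes>\<phi>\<^sub>v) x = x\<close>. As \<open>(\<Otimes>\<phi>\<^sub>v) x \<in> \<X>(T\<^sub>m)\<close> and \<open>\<Otimes>\<psi>\<^sub>v\<close> maps \<open>\<X>(T\<^sub>m)\<close> into
  \<open>\<X>(T)\<close>, \<open>x \<in> \<X>(T)\<close>.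
\<close>

section \<open>Polynomial functions of bounded degree\<close>

definition monom_eval :: "'i set \<Rightarrow> ('i \<Rightarrow> nat) \<Rightarrow> ('i \<Rightarrow> 'k::comm_ring_1) \<Rightarrow> 'k" where
  "monom_eval I \<beta> x = (\<Prod>i\<in>I. x i ^ \<beta> i)"

text \<open>A polynomial function of degree at most \<open>d\<close> in the coordinates \<open>I\<close>, presented as a list of
  terms \<open>c * x\<^sup>\<beta>\<close> with repetitions allowed, so that sums and products are list operations.\<close>

definition poly_fun_le :: "'i set \<Rightarrow> nat \<Rightarrow> (('i \<Rightarrow> 'k::comm_ring_1) \<Rightarrow> 'k) \<Rightarrow> bool" where
  "poly_fun_le I d f \<longleftrightarrow> (\<exists>L. (\<forall>(c, \<beta>)\<in>set L. \<beta> \<in> monoms I \<and> sum \<beta> I \<le> d) \<and>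
      (\<forall>x. f x = (\<Sum>(c, \<beta>)\<leftarrow>L. c * monom_eval I \<beta> x)))"

lemma poly_fun_le_const: "poly_fun_le I d (\<lambda>x. c)"
  unfolding poly_fun_le_def
  by (rule exI[of _ "[(c, \<lambda>_. 0)]"]) (auto simp: monoms_def monom_eval_def)

lemma poly_fun_le_coord:
  fixes I :: "'i set"
  assumes "finite I" "i \<in> I" "1 \<le> d"
  shows "poly_fun_le I d (\<lambda>x :: 'i \<Rightarrow> 'k::comm_ring_1. x i)"
proof -
  let ?\<beta> = "\<lambda>j. if j = i then 1 else 0 :: nat"
  have "monom_eval I ?\<beta> x = x i" for x :: "'i \<Rightarrow> 'k"
    using assms unfolding monom_eval_def by (simp add: if_distrib prod.delta cong: if_cong)
  then show ?thesis
    unfolding poly_fun_le_def using assms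
    by (intro exI[of _ "[(1, ?\<beta>)]"]) (auto simp: monoms_def sum.delta)
qed

lemma poly_fun_le_mono: "poly_fun_le I d f \<Longrightarrow> d \<le> d' \<Longrightarrow> poly_fun_le I d' f"
  unfolding poly_fun_le_def by fastforce

lemma poly_fun_le_add:
  assumes "poly_fun_le I d f" "poly_fun_le I d g"
  shows "poly_fun_le I d (\<lambda>x. f x + g x)"
proof -
  obtain L1 L2 where
    "\<forall>(c, \<beta>)\<in>set L1. \<beta> \<in> monoms I \<and> sum \<beta> I \<le> d" "\<forall>x. f x = (\<Sum>(c, \<beta>)\<leftarrow>L1. c * monom_eval I \<beta> x)"
    "\<forall>(c, \<beta>)\<in>set L2. \<beta> \<in> monoms I \<and> sum \<beta> I \<le> d" "\<forall>x. g x = (\<Sum>(c, \<beta>)\<leftarrow>L2. c * monom_eval I \<beta> x)"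
    using assms unfolding poly_fun_le_def by blast
  then show ?thesis
    unfolding poly_fun_le_def by (intro exI[of _ "L1 @ L2"]) auto
qed

lemma monom_eval_add: "monom_eval I (\<lambda>i. \<alpha> i + \<beta> i) x = monom_eval I \<alpha> x * monom_eval I \<beta> x"
  unfolding monom_eval_def by (simp add: power_add prod.distrib)

definition term_list_mult ::
  "('k::comm_ring_1 \<times> ('i \<Rightarrow> nat)) list \<Rightarrow> ('k \<times> ('i \<Rightarrow> nat)) list \<Rightarrow> ('k \<times> ('i \<Rightarrow> nat)) list" where
  "term_list_mult L1 L2 = concat (map (\<lambda>(c, \<alpha>). map (\<lambda>(c', \<beta>). (c * c', \<lambda>i. \<alpha> i + \<beta> i)) L2) L1)"

lemma sum_list_term_list_mult:
  "(\<Sum>(c, \<beta>)\<leftarrow>term_list_mult L1 L2. c * monom_eval I \<beta> x) =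
     (\<Sum>(c, \<beta>)\<leftarrow>L1. c * monom_eval I \<beta> x) * (\<Sum>(c, \<beta>)\<leftarrow>L2. c * monom_eval I \<beta> x)"
proof (induction L1)
  case (Cons t L1)
  obtain c \<alpha> where t: "t = (c, \<alpha>)" by force
  have "(\<Sum>(c', \<beta>)\<leftarrow>map (\<lambda>(c', \<beta>). (c * c', \<lambda>i. \<alpha> i + \<beta> i)) L2. c' * monom_eval I \<beta> x) =
      c * monom_eval I \<alpha> x * (\<Sum>(c', \<beta>)\<leftarrow>L2. c' * monom_eval I \<beta> x)"
    by (induction L2) (auto simp: monom_eval_add algebra_simps)
  with Cons show ?case by (simp add: t term_list_mult_def algebra_simps)
qed (simp add: term_list_mult_def)

lemma poly_fun_le_mult:
  assumes "poly_fun_le I d1 f" "poly_fun_le I d2 g"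
  shows "poly_fun_le I (d1 + d2) (\<lambda>x. f x * g x)"
proof -
  obtain L1 L2 where
    L1: "\<forall>(c, \<beta>)\<in>set L1. \<beta> \<in> monoms I \<and> sum \<beta> I \<le> d1" "\<forall>x. f x = (\<Sum>(c, \<beta>)\<leftarrow>L1. c * monom_eval I \<beta> x)" and
    L2: "\<forall>(c, \<beta>)\<in>set L2. \<beta> \<in> monoms I \<and> sum \<beta> I \<le> d2" "\<forall>x. g x = (\<Sum>(c, \<beta>)\<leftarrow>L2. c * monom_eval I \<beta> x)"
    using assms unfolding poly_fun_le_def by blast
  have "\<forall>(c, \<beta>)\<in>set (term_list_mult L1 L2). \<beta> \<in> monoms I \<and> sum \<beta> I \<le> d1 + d2"
    using L1(1) L2(1) by (fastforce simp: term_list_mult_def monoms_def sum.distrib intro: add_mono)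
  then show ?thesis
    unfolding poly_fun_le_def using L1(2) L2(2)
    by (intro exI[of _ "term_list_mult L1 L2"]) (simp add: sum_list_term_list_mult)
qed

lemma poly_fun_le_sum:
  "finite S \<Longrightarrow> (\<And>s. s \<in> S \<Longrightarrow> poly_fun_le I d (f s)) \<Longrightarrow> poly_fun_le I d (\<lambda>x. \<Sum>s\<in>S. f s x)"
proof (induction S rule: finite_induct)
  case empty
  show ?case using poly_fun_le_const[of I d 0] by simp
next
  case (insert s S)
  then show ?case using poly_fun_le_add[of I d "f s"] by simp
qed

lemma poly_fun_le_prod:
  "finite S \<Longrightarrow> (\<And>s. s \<in> S \<Longrightarrow> poly_fun_le I (d s) (f s)) \<Longrightarrow>
     poly_fun_le I (\<Sum>s\<in>S. d s) (\<lambda>x. \<Prod>s\<in>S. f s x)"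
proof (induction S rule: finite_induct)
  case empty
  show ?case using poly_fun_le_const[of I 0 1] by simp
next
  case (insert s S)
  then show ?case using poly_fun_le_mult[of I "d s" "f s"] by simp
qed

lemma poly_fun_le_power: "poly_fun_le I d f \<Longrightarrow> poly_fun_le I (d * a) (\<lambda>x. f x ^ a)"
proof (induction a)
  case 0
  show ?case using poly_fun_le_const[of I 0 1] by simp
next
  case (Suc a)
  then show ?case using poly_fun_le_mult[of I d f "d * a"] by simp
qed

lemma poly_fun_le_scale: "poly_fun_le I d f \<Longrightarrow> poly_fun_le I d (\<lambda>x. c * f x)"
  using poly_fun_le_mult[OF poly_fun_le_const[of I 0 c]] by fastforce

lemma poly_fun_le_diff:
  "poly_fun_le I d f \<Longrightarrow> poly_fun_le I d g \<Longrightarrow> poly_fun_le I d (\<lambda>x. f x - g x)"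
  using poly_fun_le_add[of I d f "\<lambda>x. (- 1) * g x"] poly_fun_le_scale[of I d g "- 1"] by simp

lemma sum_list_by_key:
  fixes L :: "('k::comm_ring_1 \<times> 'a) list"
  assumes "finite A" "snd ` set L \<subseteq> A"
  shows "(\<Sum>\<alpha>\<in>A. (\<Sum>(c, \<beta>)\<leftarrow>L. if \<beta> = \<alpha> then c else 0) * h \<alpha>) = (\<Sum>(c, \<beta>)\<leftarrow>L. c * h \<beta>)"
  using assms(2)
proof (induction L)
  case (Cons t L)
  obtain c \<beta> where t: "t = (c, \<beta>)" by force
  with Cons.prems have "\<beta> \<in> A" by auto
  have "(\<Sum>\<alpha>\<in>A. (if \<beta> = \<alpha> then c else 0) * h \<alpha>) = (\<Sum>\<alpha>\<in>A. if \<beta> = \<alpha> then c * h \<alpha> else 0)"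
    by (rule sum.cong) auto
  also have "\<dots> = c * h \<beta>" using \<open>\<beta> \<in> A\<close> assms(1) by simp
  finally have "(\<Sum>\<alpha>\<in>A. (if \<beta> = \<alpha> then c else 0) * h \<alpha>) = c * h \<beta>" .
  with Cons show ?case by (simp add: t distrib_right sum.distrib)
qed simp

lemma poly_fun_le_imp_mpoly:
  assumes "poly_fun_le I d f"
  shows "\<exists>p. mpoly_deg_le I d p \<and> (\<forall>x. mpoly_eval I p x = f x)"
proof -
  obtain L where L: "\<forall>(c, \<beta>)\<in>set L. \<beta> \<in> monoms I \<and> sum \<beta> I \<le> d"
    and f: "\<And>x. f x = (\<Sum>(c, \<beta>)\<leftarrow>L. c * monom_eval I \<beta> x)"
    using assms unfolding poly_fun_le_def by blast
  define p where "p \<alpha> = (\<Sum>(c, \<beta>)\<leftarrow>L. if \<beta> = \<alpha> then c else 0)" for \<alpha>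
  have supp: "{\<alpha>. p \<alpha> \<noteq> 0} \<subseteq> snd ` set L"
  proof
    fix \<alpha> assume "\<alpha> \<in> {\<alpha>. p \<alpha> \<noteq> 0}"
    then have "\<exists>t\<in>set L. snd t = \<alpha>"
      unfolding p_def by (induction L) (auto split: if_splits)
    then show "\<alpha> \<in> snd ` set L" by force
  qed
  have "mpoly_eval I p x = f x" for x
  proof -
    have "mpoly_eval I p x = (\<Sum>\<alpha>\<in>snd ` set L. p \<alpha> * monom_eval I \<alpha> x)"
      unfolding mpoly_eval_def monom_eval_def by (rule sum.mono_neutral_left) (use supp in auto)
    also have "\<dots> = f x"
      unfolding f p_def by (rule sum_list_by_key) auto
    finally show ?thesis .
  qed
  moreover have "mpoly_deg_le I d p"
    using supp L finite_subset[OF supp] unfolding mpoly_deg_le_def is_mpoly_def by fastforce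
  ultimately show ?thesis by blast
qed

lemma poly_fun_le_mpoly_eval_comp:
  assumes "mpoly_deg_le J D p" "finite J" "\<And>j. j \<in> J \<Longrightarrow> poly_fun_le I 1 (\<lambda>x. F x j)"
  shows "poly_fun_le I D (\<lambda>x. mpoly_eval J p (F x))"
  unfolding mpoly_eval_def
proof (rule poly_fun_le_sum)
  show "finite {\<alpha>. p \<alpha> \<noteq> 0}" using assms(1) by (simp add: mpoly_deg_le_def is_mpoly_def)
  fix \<alpha> assume "\<alpha> \<in> {\<alpha>. p \<alpha> \<noteq> 0}"
  then have deg: "sum \<alpha> J \<le> D" using assms(1) by (auto simp: mpoly_deg_le_def)
  have "poly_fun_le I (\<Sum>j\<in>J. 1 * \<alpha> j) (\<lambda>x. \<Prod>j\<in>J. F x j ^ \<alpha> j)"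
    by (rule poly_fun_le_prod[OF assms(2)]) (use assms(3) poly_fun_le_power in blast)
  then show "poly_fun_le I D (\<lambda>x. p \<alpha> * (\<Prod>j\<in>J. F x j ^ \<alpha> j))"
    using deg by (auto intro: poly_fun_le_scale poly_fun_le_mono)
qed

lemma poly_fun_le_det:
  fixes I :: "'i set"
  assumes "finite I" "\<And>i j. i < N \<Longrightarrow> j < N \<Longrightarrow> a i j \<in> I"
  shows "poly_fun_le I N (\<lambda>z :: 'i \<Rightarrow> 'k::comm_ring_1. det (mat N N (\<lambda>(i, j). z (a i j))))"
proof -
  have "det (mat N N (\<lambda>(i, j). z (a i j))) =
      (\<Sum>p\<in>{p. p permutes {0..<N}}. signof p * (\<Prod>i=0..<N. z (a i (p i))))" for z :: "_ \<Rightarrow> 'k"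
    unfolding det_def'[of "mat N N (\<lambda>(i, j). z (a i j))" N, simplified]
    by simp
  moreover have "poly_fun_le I N (\<lambda>z :: _ \<Rightarrow> 'k. \<Sum>p\<in>{p. p permutes {0..<N}}. signof p * (\<Prod>i=0..<N. z (a i (p i))))"
  proof (rule poly_fun_le_sum)
    fix p assume "p \<in> {p. p permutes {0..<N}}"
    then have "poly_fun_le I (\<Sum>i=0..<N. 1) (\<lambda>z :: _ \<Rightarrow> 'k. \<Prod>i=0..<N. z (a i (p i)))"
      using assms by (intro poly_fun_le_prod) (auto intro!: poly_fun_le_coord dest: permutes_in_image)
    then show "poly_fun_le I N (\<lambda>z :: _ \<Rightarrow> 'k. signof p * (\<Prod>i=0..<N. z (a i (p i))))"
      using poly_fun_le_scale by fastforce
  qed (simp add: finite_permutations)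
  ultimately show ?thesis by simp
qed

lemma zariski_closure_subset_aff_space:
  assumes "S \<subseteq> aff_space I"
  shows "zariski_closure I S \<subseteq> aff_space I"
proof -
  have "zero_set I {} = aff_space I" by (simp add: zero_set_def)
  with assms show ?thesis
    unfolding zariski_closure_def by (intro Inter_lower) force
qed

lemma poly_fun_le_vanishes_on_zariski_closure:
  assumes "poly_fun_le I d f" "\<And>t. t \<in> S \<Longrightarrow> f t = 0" "S \<subseteq> aff_space I" "x \<in> zariski_closure I S"
  shows "f x = 0"
proof -
  obtain q where q: "mpoly_deg_le I d q" "\<And>x. mpoly_eval I q x = f x"
    using poly_fun_le_imp_mpoly[OF assms(1)] by blast
  have "S \<subseteq> zero_set I {q}" using assms(2,3) q(2) by (auto simp: zero_set_def)
  with q(1) assms(4) have "x \<in> zero_set I {q}"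
    unfolding zariski_closure_def mpoly_deg_le_def by blast
  then show ?thesis using q(2) by (simp add: zero_set_def)
qed

section \<open>Tensor maps and equivariant models\<close>

context group_action
begin

lemma action_closed: "g \<in> carrier G \<Longrightarrow> x \<in> E \<Longrightarrow> \<phi> g x \<in> E"
  using element_image by blast

lemma action_one: "x \<in> E \<Longrightarrow> \<phi> \<one> x = x"
  using id_eq_one by (metis restrict_apply')

lemma action_inv_cancel: "g \<in> carrier G \<Longrightarrow> x \<in> E \<Longrightarrow> \<phi> (inv g) (\<phi> g x) = x"
  using orbit_sym_aux by blast

lemma action_bij: "g \<in> carrier G \<Longrightarrow> bij_betw (\<phi> g) E E"
  using bij_prop0 by (simp add: Bij_def)

lemma sum_action_reindex: "g \<in> carrier G \<Longrightarrow> (\<Sum>x\<in>E. f (\<phi> g x)) = (\<Sum>x\<in>E. f x)"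
  using sum.reindex_bij_betw[OF action_bij] by blast

end

text \<open>The tensor product of the linear maps \<open>K\<^bsup>B1 v\<^esup> \<rightarrow> K\<^bsup>B2 v\<^esup>\<close>, \<open>v < m\<close>, whose matrices
  \<open>M v\<close> have rows indexed by \<open>B2 v\<close> and columns indexed by \<open>B1 v\<close>.\<close>

definition tensor_map :: "nat \<Rightarrow> (nat \<Rightarrow> 'a set) \<Rightarrow> (nat \<Rightarrow> 'b set) \<Rightarrow> (nat \<Rightarrow> 'b \<Rightarrow> 'a \<Rightarrow> 'k)
    \<Rightarrow> ((nat \<Rightarrow> 'a) \<Rightarrow> 'k) \<Rightarrow> (nat \<Rightarrow> 'b) \<Rightarrow> 'k::comm_ring_1" where
  "tensor_map m B1 B2 M x = (\<lambda>c'. if c' \<in> Pi\<^sub>E {..<m} B2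
      then (\<Sum>c\<in>Pi\<^sub>E {..<m} B1. (\<Prod>v<m. M v (c' v) (c v)) * x c) else 0)"

definition equivariant_maps :: "('g, 'z) monoid_scheme \<Rightarrow> nat \<Rightarrow> (nat \<Rightarrow> 'a set) \<Rightarrow> (nat \<Rightarrow> 'g \<Rightarrow> 'a \<Rightarrow> 'a)
    \<Rightarrow> (nat \<Rightarrow> 'b set) \<Rightarrow> (nat \<Rightarrow> 'g \<Rightarrow> 'b \<Rightarrow> 'b) \<Rightarrow> (nat \<Rightarrow> 'b \<Rightarrow> 'a \<Rightarrow> 'k) \<Rightarrow> bool" where
  "equivariant_maps G m B1 \<phi>1 B2 \<phi>2 M \<longleftrightarrow>
     (\<forall>v<m. \<forall>g\<in>carrier G. \<forall>c'\<in>B2 v. \<forall>e\<in>B1 v. M v (\<phi>2 v g c') (\<phi>1 v g e) = M v c' e)"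

definition diag_action :: "nat \<Rightarrow> (nat \<Rightarrow> 'g \<Rightarrow> 'b \<Rightarrow> 'b) \<Rightarrow> 'g \<Rightarrow> (nat \<Rightarrow> 'b) \<Rightarrow> nat \<Rightarrow> 'b" where
  "diag_action m \<phi> g c = (\<lambda>v. if v < m then \<phi> v g (c v) else undefined)"

lemma diag_action_PiE:
  "\<forall>v<m. \<forall>e\<in>B v. \<phi> v g e \<in> B v \<Longrightarrow> c \<in> Pi\<^sub>E {..<m} B \<Longrightarrow> diag_action m \<phi> g c \<in> Pi\<^sub>E {..<m} B"
  unfolding diag_action_def by (auto simp: PiE_iff extensional_def)

lemma tensor_map_in_aff_space: "tensor_map m B1 B2 M x \<in> aff_space (Pi\<^sub>E {..<m} B2)"
  unfolding tensor_map_def aff_space_def by auto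

lemma star_tensors_subset_aff_space: "star_tensors G Br \<phi>r m B \<phi> \<subseteq> aff_space (Pi\<^sub>E {..<m} B)"
  unfolding star_tensors_def aff_space_def by (clarsimp simp del: PiE_iff)

lemma equivariant_model_subset_aff_space:
  "equivariant_model G Br \<phi>r m B \<phi> \<subseteq> aff_space (Pi\<^sub>E {..<m} B)"
  unfolding equivariant_model_def
  by (rule zariski_closure_subset_aff_space[OF star_tensors_subset_aff_space])

lemma poly_fun_le_tensor_map_coord:
  assumes "\<And>v. v < m \<Longrightarrow> finite (B1 v)"
  shows "poly_fun_le (Pi\<^sub>E {..<m} B1) 1 (\<lambda>x. tensor_map m B1 B2 M x c')"
proof (cases "c' \<in> Pi\<^sub>E {..<m} B2")
  case True
  have fin: "finite (Pi\<^sub>E {..<m} B1)" using assms by (intro finite_PiE) auto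
  have "poly_fun_le (Pi\<^sub>E {..<m} B1) 1 (\<lambda>x. \<Sum>c\<in>Pi\<^sub>E {..<m} B1. (\<Prod>v<m. M v (c' v) (c v)) * x c)"
    by (intro poly_fun_le_sum[OF fin] poly_fun_le_scale poly_fun_le_coord[OF fin]) auto
  with True show ?thesis unfolding tensor_map_def by simp
qed (simp add: tensor_map_def poly_fun_le_const)

lemma tensor_map_star_tensor:
  assumes fin: "\<And>v. v < m \<Longrightarrow> finite (B1 v)"
    and bij: "\<And>v g. v < m \<Longrightarrow> g \<in> carrier G \<Longrightarrow> bij_betw (\<phi>1 v g) (B1 v) (B1 v)"
    and M: "equivariant_maps G m B1 \<phi>1 B2 \<phi>2 M"
    and t: "t \<in> star_tensors G Br \<phi>r m B1 \<phi>1"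
  shows "tensor_map m B1 B2 M t \<in> star_tensors G Br \<phi>r m B2 \<phi>2"
proof -
  obtain A where t_def: "t = (\<lambda>c. if c \<in> Pi\<^sub>E {..<m} B1 then (\<Sum>b\<in>Br. \<Prod>v<m. A v b (c v)) else 0)"
    and A: "\<forall>v<m. \<forall>g\<in>carrier G. \<forall>b\<in>Br. \<forall>c\<in>B1 v. A v (\<phi>r g b) (\<phi>1 v g c) = A v b c"
    using t unfolding star_tensors_def by blast
  define A' where "A' v b c' = (\<Sum>e\<in>B1 v. M v c' e * A v b e)" for v b c'
  have A': "A' v (\<phi>r g b) (\<phi>2 v g c') = A' v b c'"
    if "v < m" "g \<in> carrier G" "b \<in> Br" "c' \<in> B2 v" for v g b c'
  proof -
    have "A' v (\<phi>r g b) (\<phi>2 v g c') =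
        (\<Sum>e\<in>B1 v. M v (\<phi>2 v g c') (\<phi>1 v g e) * A v (\<phi>r g b) (\<phi>1 v g e))"
      unfolding A'_def using bij[OF that(1,2)] by (rule sum.reindex_bij_betw[symmetric])
    also have "\<dots> = A' v b c'"
      unfolding A'_def using M A that by (auto simp: equivariant_maps_def intro!: sum.cong)
    finally show ?thesis .
  qed
  have "tensor_map m B1 B2 M t c' = (\<Sum>b\<in>Br. \<Prod>v<m. A' v b (c' v))"
    if c': "c' \<in> Pi\<^sub>E {..<m} B2" for c'
  proof -
    have "tensor_map m B1 B2 M t c' =
        (\<Sum>c\<in>Pi\<^sub>E {..<m} B1. (\<Prod>v<m. M v (c' v) (c v)) * (\<Sum>b\<in>Br. \<Prod>v<m. A v b (c v)))"
      using c' unfolding tensor_map_def t_def by (auto intro!: sum.cong)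
    also have "\<dots> = (\<Sum>b\<in>Br. \<Sum>c\<in>Pi\<^sub>E {..<m} B1. \<Prod>v<m. M v (c' v) (c v) * A v b (c v))"
      unfolding sum_distrib_left prod.distrib by (rule sum.swap)
    also have "\<dots> = (\<Sum>b\<in>Br. \<Prod>v<m. A' v b (c' v))"
      unfolding A'_def using fin by (intro sum.cong refl prod_sum_PiE[symmetric]) auto
    finally show ?thesis .
  qed
  then have "tensor_map m B1 B2 M t =
      (\<lambda>c'. if c' \<in> Pi\<^sub>E {..<m} B2 then (\<Sum>b\<in>Br. \<Prod>v<m. A' v b (c' v)) else 0)"
    by (auto simp: tensor_map_def)
  then show ?thesis unfolding star_tensors_def using A' by blast
qed

text \<open>Star tensors are mapped to star tensors, and polynomials pull back to polynomials.\<close>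

lemma tensor_map_equivariant_model:
  fixes x :: "(nat \<Rightarrow> 'a) \<Rightarrow> 'k::comm_ring_1" and B2 :: "nat \<Rightarrow> 'b set"
  assumes fin1: "\<And>v. v < m \<Longrightarrow> finite (B1 v)" and fin2: "\<And>v. v < m \<Longrightarrow> finite (B2 v)"
    and bij: "\<And>v g. v < m \<Longrightarrow> g \<in> carrier G \<Longrightarrow> bij_betw (\<phi>1 v g) (B1 v) (B1 v)"
    and M: "equivariant_maps G m B1 \<phi>1 B2 \<phi>2 M"
    and x: "x \<in> equivariant_model G Br \<phi>r m B1 \<phi>1"
  shows "tensor_map m B1 B2 M x \<in> equivariant_model G Br \<phi>r m B2 \<phi>2"
  unfolding equivariant_model_def zariski_closure_def
proof (rule InterI, clarify)
  let ?I1 = "Pi\<^sub>E {..<m} B1" and ?I2 = "Pi\<^sub>E {..<m} B2"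
  fix P :: "(((nat \<Rightarrow> 'b) \<Rightarrow> nat) \<Rightarrow> 'k) set"
  assume P: "\<forall>p\<in>P. is_mpoly ?I2 p" and S: "star_tensors G Br \<phi>r m B2 \<phi>2 \<subseteq> zero_set ?I2 P"
  have "mpoly_eval ?I2 p (tensor_map m B1 B2 M x) = 0" if p: "p \<in> P" for p
  proof -
    let ?D = "\<Sum>\<alpha>\<in>{\<alpha>. p \<alpha> \<noteq> 0}. sum \<alpha> ?I2"
    have "mpoly_deg_le ?I2 ?D p"
      using P p by (auto simp: mpoly_deg_le_def is_mpoly_def intro!: member_le_sum)
    then have "poly_fun_le ?I1 ?D (\<lambda>y. mpoly_eval ?I2 p (tensor_map m B1 B2 M y))"
      using fin2 by (intro poly_fun_le_mpoly_eval_comp poly_fun_le_tensor_map_coord fin1 finite_PiE) auto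
    then show ?thesis
    proof (rule poly_fun_le_vanishes_on_zariski_closure)
    show "mpoly_eval ?I2 p (tensor_map m B1 B2 M t) = 0"
      if "t \<in> star_tensors G Br \<phi>r m B1 \<phi>1" for t
      using tensor_map_star_tensor[OF fin1 bij M that] S p by (auto simp: zero_set_def)
    qed (use x in \<open>simp_all add: equivariant_model_def star_tensors_subset_aff_space\<close>)
  qed
  then show "tensor_map m B1 B2 M x \<in> zero_set ?I2 P"
    using tensor_map_in_aff_space by (auto simp: zero_set_def)
qed

lemma star_tensor_diag_invariant:
  assumes t: "t \<in> star_tensors G Br \<phi>r m B \<phi>" and Br: "group_action G Br \<phi>r"
    and closed: "\<forall>v<m. \<forall>e\<in>B v. \<phi> v g e \<in> B v"
    and g: "g \<in> carrier G" and c: "c \<in> Pi\<^sub>E {..<m} B"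
  shows "t (diag_action m \<phi> g c) = t c"
proof -
  obtain A where t_def: "t = (\<lambda>c. if c \<in> Pi\<^sub>E {..<m} B then (\<Sum>b\<in>Br. \<Prod>v<m. A v b (c v)) else 0)"
    and A: "\<forall>v<m. \<forall>g\<in>carrier G. \<forall>b\<in>Br. \<forall>c\<in>B v. A v (\<phi>r g b) (\<phi> v g c) = A v b c"
    using t unfolding star_tensors_def by blast
  have "diag_action m \<phi> g c \<in> Pi\<^sub>E {..<m} B" by (rule diag_action_PiE[where \<phi> = \<phi> and g = g, OF closed c])
  then have "t (diag_action m \<phi> g c) = (\<Sum>b\<in>Br. \<Prod>v<m. A v b (\<phi> v g (c v)))"
    unfolding t_def by (simp add: diag_action_def)
  also have "\<dots> = (\<Sum>b\<in>Br. \<Prod>v<m. A v (\<phi>r g b) (\<phi> v g (c v)))"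
    by (rule group_action.sum_action_reindex[OF Br g, symmetric])
  also have "\<dots> = t c"
    using A g c unfolding t_def by (auto intro!: sum.cong prod.cong simp: PiE_iff)
  finally show ?thesis .
qed

lemma equivariant_model_diag_invariant:
  fixes z :: "(nat \<Rightarrow> 'b) \<Rightarrow> 'k::comm_ring_1"
  assumes z: "z \<in> equivariant_model G Br \<phi>r m B \<phi>" and Br: "group_action G Br \<phi>r"
    and fin: "\<And>v. v < m \<Longrightarrow> finite (B v)"
    and closed: "\<forall>v<m. \<forall>e\<in>B v. \<phi> v g e \<in> B v"
    and g: "g \<in> carrier G" and c: "c \<in> Pi\<^sub>E {..<m} B"
  shows "z (diag_action m \<phi> g c) = z c"
proof -
  have fin': "finite (Pi\<^sub>E {..<m} B)" using fin by (intro finite_PiE) auto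
  have "diag_action m \<phi> g c \<in> Pi\<^sub>E {..<m} B" by (rule diag_action_PiE[where \<phi> = \<phi> and g = g, OF closed c])
  then have "poly_fun_le (Pi\<^sub>E {..<m} B) 1 (\<lambda>z :: _ \<Rightarrow> 'k. z (diag_action m \<phi> g c) - z c)"
    using c by (intro poly_fun_le_diff poly_fun_le_coord fin') auto
  then have "z (diag_action m \<phi> g c) - z c = 0"
    by (rule poly_fun_le_vanishes_on_zariski_closure)
      (use z star_tensor_diag_invariant[where \<phi> = \<phi> and g = g, OF _ Br closed g c] in
        \<open>simp_all add: equivariant_model_def star_tensors_subset_aff_space\<close>)
  then show ?thesis by simp
qed

lemma sum_PiE_delta:
  fixes m :: nat
  assumes "c \<in> Pi\<^sub>E {..<m} B" "\<And>v. v < m \<Longrightarrow> finite (B v)"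
  shows "(\<Sum>c'\<in>Pi\<^sub>E {..<m} B. (\<Prod>v<m. if c v = c' v then 1 else 0) * x c') = (x c :: 'k::comm_ring_1)"
proof -
  have "(\<Prod>v<m. if c v = c' v then 1 else 0) = (if c' = c then 1 else 0 :: 'k)"
    if c': "c' \<in> Pi\<^sub>E {..<m} B" for c'
  proof (cases "c' = c")
    case False
    then obtain v where "c v \<noteq> c' v" by (metis ext)
    moreover from this have "v < m" using assms(1) c' by (metis PiE_arb lessThan_iff)
    ultimately show ?thesis using False by (intro trans[OF prod_zero]) auto
  qed simp
  then have "(\<Sum>c'\<in>Pi\<^sub>E {..<m} B. (\<Prod>v<m. if c v = c' v then 1 else 0) * x c') =
      (\<Sum>c'\<in>Pi\<^sub>E {..<m} B. if c' = c then x c' else 0)"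
    by (intro sum.cong) auto
  also have "\<dots> = x c"
    using assms(1) finite_PiE[of "{..<m}" B] assms(2) by (simp add: sum.delta)
  finally show ?thesis .
qed

lemma tensor_map_tensor_map:
  assumes "\<And>v. v < m \<Longrightarrow> finite (B2 v)"
  shows "tensor_map m B2 B3 N (tensor_map m B1 B2 M x) =
    tensor_map m B1 B3 (\<lambda>v c'' c. \<Sum>c'\<in>B2 v. N v c'' c' * M v c' c) x"
proof
  fix c''
  show "tensor_map m B2 B3 N (tensor_map m B1 B2 M x) c'' =
      tensor_map m B1 B3 (\<lambda>v c'' c. \<Sum>c'\<in>B2 v. N v c'' c' * M v c' c) x c''"
  proof (cases "c'' \<in> Pi\<^sub>E {..<m} B3")
    case True
    have "tensor_map m B2 B3 N (tensor_map m B1 B2 M x) c'' =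
      (\<Sum>c\<in>Pi\<^sub>E {..<m} B1. (\<Sum>c'\<in>Pi\<^sub>E {..<m} B2. \<Prod>v<m. N v (c'' v) (c' v) * M v (c' v) (c v)) * x c)"
      using True unfolding tensor_map_def
      by (simp add: sum_distrib_left sum_distrib_right prod.distrib mult.assoc sum.swap[of _ "Pi\<^sub>E {..<m} B1"]
          cong: sum.cong)
    also have "\<dots> = tensor_map m B1 B3 (\<lambda>v c'' c. \<Sum>c'\<in>B2 v. N v c'' c' * M v c' c) x c''"
    proof -
      have "(\<Prod>v<m. \<Sum>c'\<in>B2 v. N v (c'' v) c' * M v c' (c v)) =
          (\<Sum>c'\<in>Pi\<^sub>E {..<m} B2. \<Prod>v<m. N v (c'' v) (c' v) * M v (c' v) (c v))" for c
        by (rule prod_sum_PiE) (use assms in auto)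
      with True show ?thesis unfolding tensor_map_def by simp
    qed
    finally show ?thesis .
  qed (simp add: tensor_map_def)
qed

lemma tensor_map_cong:
  assumes "\<And>v a b. v < m \<Longrightarrow> a \<in> B2 v \<Longrightarrow> b \<in> B1 v \<Longrightarrow> M v a b = M' v a b"
  shows "tensor_map m B1 B2 M x = tensor_map m B1 B2 M' x"
  unfolding tensor_map_def using assms
  by (intro ext if_cong refl sum.cong prod.cong arg_cong2[where f = "(*)"]) (auto simp: PiE_iff)

definition id_except :: "nat set \<Rightarrow> (nat \<Rightarrow> 'b \<Rightarrow> 'b \<Rightarrow> 'k) \<Rightarrow> nat \<Rightarrow> 'b \<Rightarrow> 'b \<Rightarrow> 'k::zero_neq_one" where
  "id_except J \<pi> v a b = (if v \<in> J then \<pi> v a b else if a = b then 1 else 0)"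

lemma tensor_map_id_except_empty:
  fixes m :: nat
  assumes "\<And>v. v < m \<Longrightarrow> finite (B v)" "x \<in> aff_space (Pi\<^sub>E {..<m} B)"
  shows "tensor_map m B B (id_except {} \<pi>) x = x"
proof
  fix c
  show "tensor_map m B B (id_except {} \<pi>) x c = x c"
    using sum_PiE_delta[of c m B x] assms by (auto simp: tensor_map_def aff_space_def id_except_def)
qed

lemma prod_id_except_singleton:
  fixes m :: nat and \<pi> :: "nat \<Rightarrow> 'b \<Rightarrow> 'b \<Rightarrow> 'k::comm_ring_1"
  assumes "\<And>v. v < m \<Longrightarrow> finite (B v)" "j < m" "c' \<in> Pi\<^sub>E {..<m} B"
  shows "(\<Prod>v<m. id_except {j} \<pi> v (c v) (c' v)) =
    (\<Sum>e\<in>B j. \<pi> j (c j) e * (\<Prod>v<m. if (c(j := e)) v = c' v then 1 else 0))"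
proof -
  let ?P = "\<Prod>v\<in>{..<m} - {j}. if c v = c' v then 1 else 0"
  have j: "j \<in> {..<m}" using assms(2) by simp
  have remove_j: "(\<Prod>v<m. if (c(j := e)) v = c' v then 1 else 0) = (if e = c' j then 1 else 0) * ?P" for e
    by (subst prod.remove[OF _ j]) (auto intro!: prod.cong)
  have "(\<Sum>e\<in>B j. \<pi> j (c j) e * (\<Prod>v<m. if (c(j := e)) v = c' v then 1 else 0)) =
      (\<Sum>e\<in>B j. \<pi> j (c j) e * ((if e = c' j then 1 else 0) * ?P))"
    by (simp only: remove_j)
  also have "\<dots> = (\<Sum>e\<in>B j. if e = c' j then \<pi> j (c j) e * ?P else 0)"
    by (intro sum.cong) auto
  also have "\<dots> = \<pi> j (c j) (c' j) * ?P"
    using assms by (simp add: PiE_iff)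
  also have "\<dots> = (\<Prod>v<m. id_except {j} \<pi> v (c v) (c' v))"
    by (subst prod.remove[OF _ j]) (auto intro!: prod.cong simp: id_except_def)
  finally show ?thesis by simp
qed

lemma tensor_map_id_except_singleton:
  fixes m :: nat
  assumes fin: "\<And>v. v < m \<Longrightarrow> finite (B v)" and "j < m" "c \<in> Pi\<^sub>E {..<m} B"
  shows "tensor_map m B B (id_except {j} \<pi>) x c = (\<Sum>e\<in>B j. \<pi> j (c j) e * x (c(j := e)))"
proof -
  let ?\<delta> = "\<lambda>c c'. \<Prod>v<m. if c v = c' v then 1 else 0"
  have "tensor_map m B B (id_except {j} \<pi>) x c =
      (\<Sum>c'\<in>Pi\<^sub>E {..<m} B. \<Sum>e\<in>B j. \<pi> j (c j) e * (?\<delta> (c(j := e)) c' * x c'))"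
    using assms(3) by (simp add: tensor_map_def prod_id_except_singleton[OF fin assms(2)] sum_distrib_right
        mult.assoc del: fun_upd_apply cong: sum.cong)
  also have "\<dots> = (\<Sum>e\<in>B j. \<pi> j (c j) e * (\<Sum>c'\<in>Pi\<^sub>E {..<m} B. ?\<delta> (c(j := e)) c' * x c'))"
    by (simp add: sum_distrib_left sum.swap[of _ "B j"])
  also have "\<dots> = (\<Sum>e\<in>B j. \<pi> j (c j) e * x (c(j := e)))"
  proof (rule sum.cong[OF refl])
    fix e assume "e \<in> B j"
    then have ce: "c(j := e) \<in> Pi\<^sub>E {..<m} B" using assms by (auto simp: PiE_iff extensional_def)
    show "\<pi> j (c j) e * (\<Sum>c'\<in>Pi\<^sub>E {..<m} B. ?\<delta> (c(j := e)) c' * x c') = \<pi> j (c j) e * x (c(j := e))"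
      by (simp only: sum_PiE_delta[where x = x, OF ce fin])
  qed
  finally show ?thesis .
qed

lemma tensor_map_id_except_lessThan_Suc:
  fixes m :: nat
  assumes fin: "\<And>v. v < m \<Longrightarrow> finite (B v)"
  shows "tensor_map m B B (id_except {..<Suc j} \<pi>) x =
    tensor_map m B B (id_except {..<j} \<pi>) (tensor_map m B B (id_except {j} \<pi>) x)"
proof -
  have "id_except {..<Suc j} \<pi> v a b = (\<Sum>c\<in>B v. id_except {..<j} \<pi> v a c * id_except {j} \<pi> v c b)"
    if v: "v < m" and ab: "a \<in> B v" "b \<in> B v" for v a b
  proof (cases "v < j")
    case True
    then have "(\<Sum>c\<in>B v. id_except {..<j} \<pi> v a c * id_except {j} \<pi> v c b) = (\<Sum>c\<in>B v. if c = b then \<pi> v a c else 0)"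
      by (intro sum.cong) (auto simp: id_except_def)
    with True show ?thesis using fin[OF v] ab by (simp add: id_except_def)
  next
    case False
    then have "(\<Sum>c\<in>B v. id_except {..<j} \<pi> v a c * id_except {j} \<pi> v c b) =
        (\<Sum>c\<in>B v. if c = a then id_except {j} \<pi> v c b else 0)"
      by (intro sum.cong) (auto simp: id_except_def)
    with False show ?thesis using fin[OF v] ab by (auto simp: id_except_def)
  qed
  then show ?thesis
    by (simp add: tensor_map_tensor_map[OF fin] cong: tensor_map_cong)
qed

text \<open>Induction on the number of leaves at which the identity has been replaced by \<open>\<pi> v\<close>.\<close>

lemma tensor_map_fixed:
  fixes m :: nat
  assumes fin: "\<And>v. v < m \<Longrightarrow> finite (B v)" and x: "x \<in> aff_space (Pi\<^sub>E {..<m} B)"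
    and fixed: "\<And>v c. v < m \<Longrightarrow> c \<in> Pi\<^sub>E {..<m} B \<Longrightarrow> (\<Sum>e\<in>B v. \<pi> v (c v) e * x (c(v := e))) = x c"
  shows "tensor_map m B B \<pi> x = x"
proof -
  have single: "tensor_map m B B (id_except {j} \<pi>) x = x" if "j < m" for j
  proof
    fix c show "tensor_map m B B (id_except {j} \<pi>) x c = x c"
      using x tensor_map_id_except_singleton[where m = m and B = B and \<pi> = \<pi> and x = x, OF fin that] fixed[OF that]
      by (cases "c \<in> Pi\<^sub>E {..<m} B") (auto simp: tensor_map_def aff_space_def)
  qed
  have "tensor_map m B B (id_except {..<j} \<pi>) x = x" if "j \<le> m" for j
    using that
  proof (induction j)
    case 0
    then show ?case using tensor_map_id_except_empty[OF fin x] by simp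
  next
    case (Suc j)
    then show ?case using single by (simp add: tensor_map_id_except_lessThan_Suc[OF fin])
  qed
  moreover have "tensor_map m B B (id_except {..<m} \<pi>) x = tensor_map m B B \<pi> x"
    by (rule tensor_map_cong) (simp add: id_except_def)
  ultimately show ?thesis by simp
qed

lemma diag_action_one:
  assumes "\<And>v. v < m \<Longrightarrow> group_action G (B v) (\<phi> v)" "c \<in> Pi\<^sub>E {..<m} B"
  shows "diag_action m \<phi> \<one>\<^bsub>G\<^esub> c = c"
proof
  fix v show "diag_action m \<phi> \<one>\<^bsub>G\<^esub> c v = c v"
    using assms group_action.action_one[OF assms(1)] by (auto simp: diag_action_def PiE_iff extensional_def)
qed

definition pullback_polys :: "nat \<Rightarrow> (nat \<Rightarrow> 'a set) \<Rightarrow> (nat \<Rightarrow> 'b set) \<Rightarrow> (nat \<Rightarrow> 'b \<Rightarrow> 'a \<Rightarrow> 'k) set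
    \<Rightarrow> nat \<Rightarrow> (((nat \<Rightarrow> 'b) \<Rightarrow> nat) \<Rightarrow> 'k::comm_ring_1) set \<Rightarrow> (((nat \<Rightarrow> 'a) \<Rightarrow> nat) \<Rightarrow> 'k) set" where
  "pullback_polys m B1 B2 Ms D P = {q. mpoly_deg_le (Pi\<^sub>E {..<m} B1) D q \<and> (\<exists>p\<in>P. \<exists>M\<in>Ms.
     \<forall>y. mpoly_eval (Pi\<^sub>E {..<m} B1) q y = mpoly_eval (Pi\<^sub>E {..<m} B2) p (tensor_map m B1 B2 M y))}"

lemma zero_set_pullback_polys:
  assumes P: "\<forall>p\<in>P. mpoly_deg_le (Pi\<^sub>E {..<m} B2) D p"
    and fin: "\<And>v. v < m \<Longrightarrow> finite (B1 v)" "\<And>v. v < m \<Longrightarrow> finite (B2 v)"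
  shows "x \<in> zero_set (Pi\<^sub>E {..<m} B1) (pullback_polys m B1 B2 Ms D P) \<longleftrightarrow>
    x \<in> aff_space (Pi\<^sub>E {..<m} B1) \<and> (\<forall>M\<in>Ms. tensor_map m B1 B2 M x \<in> zero_set (Pi\<^sub>E {..<m} B2) P)"
proof -
  have "\<exists>q. mpoly_deg_le (Pi\<^sub>E {..<m} B1) D q \<and>
    (\<forall>y. mpoly_eval (Pi\<^sub>E {..<m} B1) q y = mpoly_eval (Pi\<^sub>E {..<m} B2) p (tensor_map m B1 B2 M y))"
    if "p \<in> P" for p M
  proof -
    have "poly_fun_le (Pi\<^sub>E {..<m} B1) D (\<lambda>y. mpoly_eval (Pi\<^sub>E {..<m} B2) p (tensor_map m B1 B2 M y))"
      using P that fin by (intro poly_fun_le_mpoly_eval_comp poly_fun_le_tensor_map_coord finite_PiE) auto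
    then show ?thesis by (rule poly_fun_le_imp_mpoly)
  qed
  then show ?thesis
    unfolding zero_set_def pullback_polys_def using tensor_map_in_aff_space by fastforce
qed

section \<open>Determinants and rank\<close>

lemma det_low_rank_eq_0:
  fixes P :: "nat \<Rightarrow> 'b \<Rightarrow> 'k::comm_ring_1"
  assumes "finite B" "card B < N"
  shows "det (mat N N (\<lambda>(i, j). \<Sum>b\<in>B. P i b * Q b j)) = 0"
proof -
  let ?r = "card B"
  obtain en where en: "bij_betw en {..<?r} B"
    using ex_bij_betw_nat_finite[OF assms(1)] by (metis atLeast0LessThan)
  define P' where "P' = mat N N (\<lambda>(i, l). if l < ?r then P i (en l) else 0)"
  define Q' where "Q' = mat N N (\<lambda>(l, j). if l < ?r then Q (en l) j else 0)"
  have P': "P' \<in> carrier_mat N N" and Q': "Q' \<in> carrier_mat N N"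
    unfolding P'_def Q'_def by auto
  have "P' * Q' = mat N N (\<lambda>(i, j). \<Sum>b\<in>B. P i b * Q b j)"
  proof (rule eq_matI)
    fix i j assume "i < dim_row (mat N N (\<lambda>(i, j). \<Sum>b\<in>B. P i b * Q b j))"
      "j < dim_col (mat N N (\<lambda>(i, j). \<Sum>b\<in>B. P i b * Q b j))"
    then have ij: "i < N" "j < N" by auto
    have "(P' * Q') $$ (i, j) = (\<Sum>l<N. (if l < ?r then P i (en l) * Q (en l) j else 0))"
      using ij P' Q' unfolding P'_def Q'_def by (auto simp: scalar_prod_def atLeast0LessThan intro!: sum.cong)
    also have "\<dots> = (\<Sum>l<?r. P i (en l) * Q (en l) j)"
      using assms(2) by (intro sum.mono_neutral_cong_right) auto
    also have "\<dots> = (\<Sum>b\<in>B. P i b * Q b j)"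
      by (rule sum.reindex_bij_betw[OF en])
    finally show "(P' * Q') $$ (i, j) = mat N N (\<lambda>(i, j). \<Sum>b\<in>B. P i b * Q b j) $$ (i, j)"
      using ij by simp
  qed (auto simp: P'_def Q'_def)
  moreover have "det P' = 0"
  proof -
    have last: "N - 1 < N" using assms(2) by auto
    have "det P' = (\<Sum>i<N. P' $$ (i, N - 1) * cofactor P' i (N - 1))"
      by (rule laplace_expansion_column[OF P' last])
    also have "\<dots> = 0" using assms(2) by (auto intro!: sum.neutral simp: P'_def)
    finally show ?thesis .
  qed
  ultimately show ?thesis using det_mult[OF P' Q'] by simp
qed

lemma det_Schur_complement:
  fixes A :: "'k::field mat"
  assumes A: "A \<in> carrier_mat (Suc N) (Suc N)" and a: "A $$ (0, 0) \<noteq> 0"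
  shows "det A = A $$ (0, 0) *
    det (mat N N (\<lambda>(i, j). A $$ (Suc i, Suc j) - A $$ (Suc i, 0) * A $$ (0, Suc j) / A $$ (0, 0)))"
proof -
  let ?a = "A $$ (0, 0)"
  let ?S = "mat N N (\<lambda>(i, j). A $$ (Suc i, Suc j) - A $$ (Suc i, 0) * A $$ (0, Suc j) / ?a)"
  define E where "E = mat (Suc N) (Suc N)
    (\<lambda>(i, l). (if l = i then 1 else 0) + (if l = 0 \<and> i \<noteq> 0 then - A $$ (i, 0) / ?a else 0))"
  have E: "E \<in> carrier_mat (Suc N) (Suc N)" unfolding E_def by simp
  have "det E = prod_list (diag_mat E)"
    by (rule det_lower_triangular[OF _ E]) (auto simp: E_def)
  also have "diag_mat E = map (\<lambda>i. 1) [0..<Suc N]"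
    unfolding diag_mat_def using E by (auto simp: E_def)
  finally have det_E: "det E = 1" by (simp add: map_replicate_const)
  define B where "B = E * A"
  have B: "B \<in> carrier_mat (Suc N) (Suc N)" unfolding B_def using E A by simp
  have B_entry: "B $$ (i, j) = A $$ (i, j) - (if i \<noteq> 0 then A $$ (i, 0) / ?a * A $$ (0, j) else 0)"
    if "i < Suc N" "j < Suc N" for i j
  proof -
    have "B $$ (i, j) = (\<Sum>l\<in>{0..<Suc N}. E $$ (i, l) * A $$ (l, j))"
      unfolding B_def using that E A by (simp add: scalar_prod_def)
    also have "\<dots> = (\<Sum>l\<in>{0..<Suc N}. (if l = i then A $$ (l, j) else 0) -
        (if l = 0 \<and> i \<noteq> 0 then A $$ (i, 0) / ?a * A $$ (l, j) else 0))"
      using that by (intro sum.cong) (auto simp: E_def algebra_simps)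
    also have "\<dots> = A $$ (i, j) - (if i \<noteq> 0 then A $$ (i, 0) / ?a * A $$ (0, j) else 0)"
      using that by (simp add: sum_subtractf sum.delta if_distrib[of "\<lambda>b. b \<and> _"] cong: if_cong)
    finally show ?thesis .
  qed
  have "det A = det B" unfolding B_def using det_mult[OF E A] det_E by simp
  also have "det B = (\<Sum>i<Suc N. B $$ (i, 0) * cofactor B i 0)"
    by (rule laplace_expansion_column[OF B]) simp
  also have "\<dots> = ?a * cofactor B 0 0"
    using a by (simp add: B_entry lessThan_Suc_eq_insert_0 sum.reindex)
  also have "cofactor B 0 0 = det ?S"
  proof -
    have "mat_delete B 0 0 = ?S"
      using B by (intro eq_matI) (auto simp: mat_delete_def B_entry)
    then show ?thesis by (simp add: cofactor_def)
  qed
  finally show ?thesis .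
qed

text \<open>The Schur complement at the pivot \<open>y Cp dp\<close> is the rank-one update of \<open>y\<close>.\<close>

lemma det_bordered_minor:
  fixes y :: "'c \<Rightarrow> 'r \<Rightarrow> 'k::field"
  assumes "y Cp dp \<noteq> 0"
  shows "det (mat (Suc N) (Suc N) (\<lambda>(i, j). y (case_nat Cp cs j) (case_nat dp ds i))) =
    y Cp dp * det (mat N N (\<lambda>(i, j). y (cs j) (ds i) - y Cp (ds i) * y (cs j) dp / y Cp dp))"
proof -
  let ?A = "mat (Suc N) (Suc N) (\<lambda>(i, j). y (case_nat Cp cs j) (case_nat dp ds i))"
  have "det ?A = ?A $$ (0, 0) * det (mat N N
      (\<lambda>(i, j). ?A $$ (Suc i, Suc j) - ?A $$ (Suc i, 0) * ?A $$ (0, Suc j) / ?A $$ (0, 0)))"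
    by (rule det_Schur_complement) (use assms in auto)
  also have "mat N N (\<lambda>(i, j). ?A $$ (Suc i, Suc j) - ?A $$ (Suc i, 0) * ?A $$ (0, Suc j) / ?A $$ (0, 0)) =
      mat N N (\<lambda>(i, j). y (cs j) (ds i) - y Cp (ds i) * y (cs j) dp / y Cp dp)"
    by (intro eq_matI) auto
  finally show ?thesis by simp
qed

lemma low_rank_factorization_rank_one_update:
  fixes y :: "'c \<Rightarrow> 'r \<Rightarrow> 'k::field"
  assumes "finite R" "dp \<in> R"
    and "\<forall>C\<in>Cs. \<forall>e\<in>R. y C e - y Cp e * y C dp / a = (\<Sum>j<r. (\<Sum>d\<in>R. L j d * (y C d - y Cp d * y C dp / a)) * u j e)"
  shows "\<exists>u L. \<forall>C\<in>Cs. \<forall>e\<in>R. y C e = (\<Sum>j<Suc r. (\<Sum>d\<in>R. L j d * y C d) * u j e)"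
proof -
  define u' where "u' j = (if j < r then u j else y Cp)" for j
  define L' where "L' j d = (if j < r then L j d - (if d = dp then (\<Sum>d'\<in>R. L j d' * y Cp d') / a else 0)
      else (if d = dp then 1 / a else 0))" for j d
  have L'_low: "(\<Sum>d\<in>R. L' j d * y C d) = (\<Sum>d\<in>R. L j d * (y C d - y Cp d * y C dp / a))"
    if "j < r" for j C
  proof -
    have "(\<Sum>d\<in>R. L' j d * y C d) = (\<Sum>d\<in>R. L j d * y C d) -
        (\<Sum>d\<in>R. if d = dp then (\<Sum>d'\<in>R. L j d' * y Cp d') / a * y C d else 0)"
      unfolding sum_subtractf[symmetric] using that by (intro sum.cong) (auto simp: L'_def algebra_simps)
    also have "\<dots> = (\<Sum>d\<in>R. L j d * (y C d - y Cp d * y C dp / a))"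
      using assms(1,2)
      by (simp add: algebra_simps sum_subtractf sum_distrib_left sum_distrib_right sum_divide_distrib)
    finally show ?thesis .
  qed
  have L'_top: "(\<Sum>d\<in>R. L' r d * y C d) = y C dp / a" for C
    using assms(1,2) by (simp add: L'_def if_distrib[of "\<lambda>b. b * _"] cong: if_cong)
  have "y C e = (\<Sum>j<Suc r. (\<Sum>d\<in>R. L' j d * y C d) * u' j e)" if "C \<in> Cs" "e \<in> R" for C e
  proof -
    have "y C e = (y C e - y Cp e * y C dp / a) + y C dp / a * y Cp e"
      by (simp add: mult.commute)
    also have "\<dots> = (\<Sum>j<r. (\<Sum>d\<in>R. L j d * (y C d - y Cp d * y C dp / a)) * u j e) + y C dp / a * y Cp e"
      using assms(3) that by simp
    also have "(\<Sum>j<r. (\<Sum>d\<in>R. L j d * (y C d - y Cp d * y C dp / a)) * u j e) =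
        (\<Sum>j<r. (\<Sum>d\<in>R. L' j d * y C d) * u' j e)"
      by (intro sum.cong) (simp_all add: L'_low u'_def)
    also have "y C dp / a * y Cp e = (\<Sum>d\<in>R. L' r d * y C d) * u' r e"
      by (simp add: L'_top u'_def)
    finally show ?thesis by simp
  qed
  then show ?thesis by blast
qed

text \<open>Induction on \<open>N\<close>: the rank-one update at a nonzero pivot has vanishing
  \<open>(N - 1)\<close>-minors.\<close>

lemma vanishing_minors_imp_low_rank_factorization:
  fixes y :: "'c \<Rightarrow> 'r \<Rightarrow> 'k::field"
  assumes "finite R"
    and "\<And>ds cs. \<forall>i<N. ds i \<in> R \<Longrightarrow> \<forall>j<N. cs j \<in> Cs \<Longrightarrow> det (mat N N (\<lambda>(i, j). y (cs j) (ds i))) = 0"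
  shows "\<exists>r<N. \<exists>u L. \<forall>C\<in>Cs. \<forall>e\<in>R. y C e = (\<Sum>j<r. (\<Sum>d\<in>R. L j d * y C d) * u j e)"
  using assms(2)
proof (induction N arbitrary: y)
  case 0
  then show ?case by (simp add: det_def)
next
  case (Suc N)
  show ?case
  proof (cases "\<forall>C\<in>Cs. \<forall>e\<in>R. y C e = 0")
    case True
    then show ?thesis by (intro exI[of _ 0]) auto
  next
    case False
    then obtain C0 d0 where C0: "C0 \<in> Cs" and d0: "d0 \<in> R" and a: "y C0 d0 \<noteq> 0" by blast
    define y' where "y' C e = y C e - y C0 e * y C d0 / y C0 d0" for C e
    have "det (mat N N (\<lambda>(i, j). y' (cs j) (ds i))) = 0" if "\<forall>i<N. ds i \<in> R" "\<forall>j<N. cs j \<in> Cs" for ds cs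
    proof -
      have "det (mat (Suc N) (Suc N) (\<lambda>(i, j). y (case_nat C0 cs j) (case_nat d0 ds i))) = 0"
        using that C0 d0 by (intro Suc.prems) (auto split: nat.split)
      then show ?thesis using a unfolding det_bordered_minor[where y = y and Cp = C0 and dp = d0, OF a] y'_def by simp
    qed
    then obtain r u L where r: "r < N"
      and fact: "\<forall>C\<in>Cs. \<forall>e\<in>R. y' C e = (\<Sum>j<r. (\<Sum>d\<in>R. L j d * y' C d) * u j e)"
      using Suc.IH by blast
    from fact have "\<exists>u L. \<forall>C\<in>Cs. \<forall>e\<in>R. y C e = (\<Sum>j<Suc r. (\<Sum>d\<in>R. L j d * y C d) * u j e)"
      unfolding y'_def by (rule low_rank_factorization_rank_one_update[OF assms(1) d0])
    moreover have "Suc r < Suc N" using r by simp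
    ultimately show ?thesis by blast
  qed
qed

section \<open>The order of the group is invertible in the field\<close>

lemma zero_sum_rows_dependent:
  fixes w :: "nat \<Rightarrow> nat \<Rightarrow> 'k::field"
  assumes "0 < d" "\<And>j. j < d \<Longrightarrow> (\<Sum>i<d. w j i) = 0"
  shows "\<exists>c. (\<forall>i<d. (\<Sum>j<d. c j * w j i) = 0) \<and> (\<exists>j<d. c j \<noteq> 0)"
proof -
  define W where "W = mat d d (\<lambda>(j, i). w j i)"
  have W: "W \<in> carrier_mat d d" unfolding W_def by simp
  let ?one = "vec d (\<lambda>_. 1 :: 'k)"
  have "?one \<noteq> 0\<^sub>v d" using assms(1) by (metis index_vec index_zero_vec(1) zero_neq_one)
  moreover have "W *\<^sub>v ?one = 0\<^sub>v d"
    using assms(2) by (intro eq_vecI) (auto simp: W_def scalar_prod_def atLeast0LessThan)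
  moreover have "?one \<in> carrier_vec d" by simp
  ultimately have "det W = 0" using det_0_iff_vec_prod_zero_field[OF W] by blast
  then have "det (transpose_mat W) = 0" using det_transpose[OF W] by simp
  then obtain c where c: "c \<in> carrier_vec d" "c \<noteq> 0\<^sub>v d" "transpose_mat W *\<^sub>v c = 0\<^sub>v d"
    using det_0_iff_vec_prod_zero_field[of "transpose_mat W" d] W by auto
  have "(\<Sum>j<d. c $ j * w j i) = 0" if "i < d" for i
    using arg_cong[OF c(3), of "\<lambda>v. v $ i"] that c(1)
    by (simp add: W_def scalar_prod_def atLeast0LessThan mult.commute)
  moreover have "\<exists>j<d. c $ j \<noteq> 0" using c(1,2) by (metis eq_vecI carrier_vecD index_zero_vec)
  ultimately show ?thesis by blast
qed

lemma sum_bij_betw_delta: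
  assumes "bij_betw f A B" "finite A" "y \<in> B"
  shows "(\<Sum>l\<in>A. if f l = y then F l else 0) = F (the_inv_into A f y)"
proof -
  have "f l = y \<longleftrightarrow> l = the_inv_into A f y" if "l \<in> A" for l
    using assms that by (metis bij_betw_def f_the_inv_into_f the_inv_into_f_eq)
  then have "(\<Sum>l\<in>A. if f l = y then F l else 0) = (\<Sum>l\<in>A. if l = the_inv_into A f y then F l else 0)"
    by (intro sum.cong) auto
  also have "\<dots> = F (the_inv_into A f y)"
    using assms by (simp add: bij_betw_def the_inv_into_into)
  finally show ?thesis .
qed

context group
begin

lemma sum_mult_left_reindex: "a \<in> carrier G \<Longrightarrow> (\<Sum>x\<in>carrier G. f (a \<otimes> x)) = (\<Sum>x\<in>carrier G. f x)"
  by (rule sum.reindex_bij_witness[where i = "\<lambda>x. inv a \<otimes> x" and j = "\<lambda>x. a \<otimes> x"])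
    (auto simp: m_assoc[symmetric])

lemma regular_mat_rep:
  assumes en: "bij_betw en {..<d} (carrier G)"
  shows "is_mat_rep G d (\<lambda>g i j. if en i = g \<otimes> en j then 1 else 0 :: 'k::field)"
  unfolding is_mat_rep_def
proof (intro conjI allI ballI impI)
  have en_in: "en i \<in> carrier G" if "i < d" for i using en that by (auto simp: bij_betw_def)
  fix g h i j assume g: "g \<in> carrier G" and h: "h \<in> carrier G" and ij: "i < d" "j < d"
  have "(\<Sum>l<d. (if en i = g \<otimes> en l then 1 else 0) * (if en l = h \<otimes> en j then 1 else 0 :: 'k)) =
      (\<Sum>l<d. if en l = h \<otimes> en j then (if en i = g \<otimes> en l then 1 else 0) else 0)"
    by (intro sum.cong) auto
  also have "\<dots> = (if en i = g \<otimes> en (the_inv_into {..<d} en (h \<otimes> en j)) then 1 else 0)"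
    by (rule sum_bij_betw_delta[OF en]) (use h en_in ij in auto)
  also have "en (the_inv_into {..<d} en (h \<otimes> en j)) = h \<otimes> en j"
    using en h en_in ij by (auto simp: bij_betw_def f_the_inv_into_f)
  finally show "(if en i = g \<otimes> h \<otimes> en j then 1 else 0) =
      (\<Sum>l<d. (if en i = g \<otimes> en l then 1 else 0) * (if en l = h \<otimes> en j then 1 else 0 :: 'k))"
    using g h en_in ij by (simp add: m_assoc)
next
  fix i j assume ij: "i < d" "j < d"
  then have "en j \<in> carrier G" using en by (auto simp: bij_betw_def)
  with en ij show "(if en i = \<one> \<otimes> en j then 1 else 0 :: 'k) = (if i = j then 1 else 0)"
    by (auto simp: bij_betw_def inj_on_def)
qed

text \<open>An eigenvector of all matrices of the regular representation with nonzero coordinate sum is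
  fixed by the group, hence constant, and then its coordinate sum is \<open>d\<close> times a constant.\<close>

lemma regular_eigenvector_coord_sum_eq_0:
  fixes w :: "nat \<Rightarrow> 'k::field"
  assumes en: "bij_betw en {..<d} (carrier G)" and d: "of_nat d = (0 :: 'k)"
    and eig: "\<And>g. g \<in> carrier G \<Longrightarrow>
      \<exists>e. \<forall>i<d. (\<Sum>l<d. (if en i = g \<otimes> en l then 1 else 0) * w l) = e * w i"
  shows "(\<Sum>i<d. w i) = 0"
proof (rule ccontr)
  assume s: "(\<Sum>i<d. w i) \<noteq> 0"
  define W where "W x = w (the_inv_into {..<d} en x)" for x
  have en_in: "en i \<in> carrier G" if "i < d" for i using en that by (auto simp: bij_betw_def)
  have W_en: "W (en i) = w i" if "i < d" for i
    using en that by (simp add: W_def bij_betw_def the_inv_into_f_f)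
  have sum_W: "(\<Sum>x\<in>carrier G. W x) = (\<Sum>i<d. w i)"
    using sum.reindex_bij_betw[OF en, of W] W_en by simp
  have eig_W: "\<exists>e. \<forall>x\<in>carrier G. W (inv g \<otimes> x) = e * W x" if g: "g \<in> carrier G" for g
  proof -
    obtain e where e: "\<forall>i<d. (\<Sum>l<d. (if en i = g \<otimes> en l then 1 else 0) * w l) = e * w i"
      using eig[OF g] by blast
    have "W (inv g \<otimes> en i) = e * W (en i)" if i: "i < d" for i
    proof -
      have "(\<Sum>l<d. (if en i = g \<otimes> en l then 1 else 0) * w l) = (\<Sum>l<d. if en l = inv g \<otimes> en i then w l else 0)"
        using g en_in[OF i] en_in by (intro sum.cong) (auto simp: inv_solve_left)
      also have "\<dots> = W (inv g \<otimes> en i)"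
        unfolding W_def using g en_in[OF i] by (intro sum_bij_betw_delta[OF en]) auto
      finally show ?thesis using e i W_en by simp
    qed
    moreover have "\<exists>i<d. x = en i" if "x \<in> carrier G" for x using en that by (auto simp: bij_betw_def)
    ultimately have "\<forall>x\<in>carrier G. W (inv g \<otimes> x) = e * W x" by blast
    then show ?thesis ..
  qed
  have W_shift: "W (inv g \<otimes> x) = W x" if g: "g \<in> carrier G" and x: "x \<in> carrier G" for g x
  proof -
    obtain e where e: "\<forall>x\<in>carrier G. W (inv g \<otimes> x) = e * W x" using eig_W[OF g] by blast
    have "(\<Sum>x\<in>carrier G. W x) = (\<Sum>x\<in>carrier G. W (inv g \<otimes> x))"
      using g by (simp add: sum_mult_left_reindex)
    also have "\<dots> = e * (\<Sum>x\<in>carrier G. W x)" using e by (simp add: sum_distrib_left)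
    finally have "e = 1" using s sum_W by simp
    then show ?thesis using e x by simp
  qed
  have const: "W x = W \<one>" if "x \<in> carrier G" for x
    using W_shift[of "inv x" \<one>] that by simp
  have "(\<Sum>x\<in>carrier G. W x) = (\<Sum>x\<in>carrier G. W \<one>)"
    by (rule sum.cong[OF refl]) (rule const)
  also have "\<dots> = of_nat (card (carrier G)) * W \<one>" by simp
  also have "card (carrier G) = d" using en by (simp add: bij_betw_same_card[symmetric])
  finally show False using s sum_W d by simp
qed

lemma of_nat_card_carrier_neq_0:
  assumes "finite (carrier G)"
    and split: "\<And>d (\<rho> :: 'a \<Rightarrow> nat \<Rightarrow> nat \<Rightarrow> 'k::field). is_mat_rep G d \<rho> \<Longrightarrow> splits_1dim G d \<rho>"
  shows "of_nat (card (carrier G)) \<noteq> (0 :: 'k)"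
proof
  assume d: "of_nat (card (carrier G)) = (0 :: 'k)"
  obtain en where en: "bij_betw en {..<card (carrier G)} (carrier G)"
    using ex_bij_betw_nat_finite[OF assms(1)] by (metis atLeast0LessThan)
  let ?d = "card (carrier G)"
  have "splits_1dim G ?d (\<lambda>g i j. if en i = g \<otimes> en j then 1 else 0 :: 'k)"
    by (rule split[OF regular_mat_rep[OF en]])
  then obtain w :: "nat \<Rightarrow> nat \<Rightarrow> 'k"
    where indep: "\<forall>c. (\<forall>i<?d. (\<Sum>j<?d. c j * w j i) = 0) \<longrightarrow> (\<forall>j<?d. c j = 0)"
    and eig: "\<forall>j<?d. \<forall>g\<in>carrier G. \<exists>e. \<forall>i<?d.
        (\<Sum>l<?d. (if en i = g \<otimes> en l then 1 else 0) * w j l) = e * w j i"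
    unfolding splits_1dim_def by blast
  have "?d > 0" using assms(1) one_closed by (auto simp: card_gt_0_iff)
  moreover have "(\<Sum>i<?d. w j i) = 0" if "j < ?d" for j
    using regular_eigenvector_coord_sum_eq_0[OF en d] eig that by blast
  ultimately obtain c where "\<forall>i<?d. (\<Sum>j<?d. c j * w j i) = 0" and "\<exists>j<?d. c j \<noteq> 0"
    using zero_sum_rows_dependent by blast
  then show False using indep by blast
qed

end

section \<open>Equivariant maps into \<open>K[G]\<^sup>n\<close>\<close>

text \<open>Flattenings of star tensors at a leaf factor through \<open>K\<^bsup>Br\<^esup>\<close>, so their minors of size
  greater than \<open>card Br\<close> vanish, and so they do on the whole equivariant model.\<close>

lemma star_tensor_flattening_minor_eq_0:
  assumes t: "t \<in> star_tensors G Br \<phi>r m B \<phi>" and "finite Br" "card Br < N" "v < m"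
    and ds: "\<forall>i<N. ds i \<in> B v" and cs: "\<forall>j<N. cs j \<in> Pi\<^sub>E {..<m} B"
  shows "det (mat N N (\<lambda>(i, j). t ((cs j)(v := ds i)))) = 0"
proof -
  obtain A where t_def: "t = (\<lambda>c. if c \<in> Pi\<^sub>E {..<m} B then (\<Sum>b\<in>Br. \<Prod>w<m. A w b (c w)) else 0)"
    using t unfolding star_tensors_def by blast
  have v: "v \<in> {..<m}" using \<open>v < m\<close> by simp
  have "t ((cs j)(v := ds i)) = (\<Sum>b\<in>Br. A v b (ds i) * (\<Prod>w\<in>{..<m} - {v}. A w b (cs j w)))"
    if "i < N" "j < N" for i j
  proof -
    have "(cs j)(v := ds i) \<in> Pi\<^sub>E {..<m} B"
      using ds cs that v by (auto simp: PiE_iff extensional_def)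
    then show ?thesis
      unfolding t_def by (auto simp: prod.remove[OF _ v] intro!: sum.cong prod.cong)
  qed
  then have "mat N N (\<lambda>(i, j). t ((cs j)(v := ds i))) =
      mat N N (\<lambda>(i, j). \<Sum>b\<in>Br. A v b (ds i) * (\<Prod>w\<in>{..<m} - {v}. A w b (cs j w)))"
    by (intro eq_matI) auto
  then show ?thesis using det_low_rank_eq_0[OF assms(2,3)] by simp
qed

lemma equivariant_model_flattening_minor_eq_0:
  fixes z :: "(nat \<Rightarrow> 'b) \<Rightarrow> 'k::comm_ring_1"
  assumes z: "z \<in> equivariant_model G Br \<phi>r m B \<phi>" and "finite Br" "card Br < N" "v < m"
    and fin: "\<And>v. v < m \<Longrightarrow> finite (B v)"
    and ds: "\<forall>i<N. ds i \<in> B v" and cs: "\<forall>j<N. cs j \<in> Pi\<^sub>E {..<m} B"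
  shows "det (mat N N (\<lambda>(i, j). z ((cs j)(v := ds i)))) = 0"
proof -
  have "(cs j)(v := ds i) \<in> Pi\<^sub>E {..<m} B" if "i < N" "j < N" for i j
    using ds cs that \<open>v < m\<close> by (auto simp: PiE_iff extensional_def)
  then have "poly_fun_le (Pi\<^sub>E {..<m} B) N (\<lambda>z :: _ \<Rightarrow> 'k. det (mat N N (\<lambda>(i, j). z ((cs j)(v := ds i)))))"
    using fin by (intro poly_fun_le_det finite_PiE) auto
  then show ?thesis
    by (rule poly_fun_le_vanishes_on_zariski_closure)
      (use z star_tensor_flattening_minor_eq_0[OF _ assms(2-4) ds cs] in
        \<open>simp_all add: equivariant_model_def star_tensors_subset_aff_space\<close>)
qed

lemma regn_action_closed:
  "group G \<Longrightarrow> g \<in> carrier G \<Longrightarrow> p \<in> regn_basis G n \<Longrightarrow> regn_action G g p \<in> regn_basis G n"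
  by (auto simp: regn_action_def regn_basis_def group.is_monoid monoid.m_closed)

lemma regn_action_bij:
  assumes "group G" "g \<in> carrier G"
  shows "bij_betw (regn_action G g) (regn_basis G n) (regn_basis G n)"
proof (rule bij_betw_byWitness[where f' = "regn_action G (inv\<^bsub>G\<^esub> g)"])
  interpret group G by fact
  show "\<forall>p\<in>regn_basis G n. regn_action G (inv\<^bsub>G\<^esub> g) (regn_action G g p) = p"
    "\<forall>p\<in>regn_basis G n. regn_action G g (regn_action G (inv\<^bsub>G\<^esub> g) p) = p"
    using assms(2) by (auto simp: regn_action_def regn_basis_def m_assoc[symmetric])
  show "regn_action G g ` regn_basis G n \<subseteq> regn_basis G n"
    "regn_action G (inv\<^bsub>G\<^esub> g) ` regn_basis G n \<subseteq> regn_basis G n"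
    using assms(2) by (auto simp: regn_action_def regn_basis_def)
qed

text \<open>The matrix of the equivariant map \<open>V\<^sub>v \<rightarrow> K[G]\<^sup>n\<close> dual to \<open>g f\<^sub>i \<mapsto> g \<cdot> t i v\<close> for
  \<open>i < N\<close> and \<open>g f\<^sub>i \<mapsto> 0\<close> for \<open>i \<ge> N\<close>.\<close>

definition orbit_matrix :: "(nat \<Rightarrow> 'g \<Rightarrow> 'b \<Rightarrow> 'b) \<Rightarrow> nat \<Rightarrow> (nat \<Rightarrow> nat \<Rightarrow> 'b) \<Rightarrow> nat \<Rightarrow> 'g \<times> nat \<Rightarrow> 'b \<Rightarrow> 'k::comm_ring_1" where
  "orbit_matrix \<phi> N t v p e = (if snd p < N \<and> \<phi> v (fst p) (t (snd p) v) = e then 1 else 0)"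

lemma orbit_matrix_equivariant:
  assumes action: "\<And>v. v < m \<Longrightarrow> group_action G (B v) (\<phi> v)"
    and t: "\<And>i v. i < N \<Longrightarrow> v < m \<Longrightarrow> t i v \<in> B v"
  shows "equivariant_maps G m B \<phi> (\<lambda>_. regn_basis G n) (\<lambda>_. regn_action G) (orbit_matrix \<phi> N t)"
  unfolding equivariant_maps_def
proof (intro allI impI ballI)
  fix v g p e assume v: "v < m" and g: "g \<in> carrier G" and p: "p \<in> regn_basis G n" and e: "e \<in> B v"
  interpret group_action G "B v" "\<phi> v" using action[OF v] .
  have "fst p \<in> carrier G" using p by (auto simp: regn_basis_def)
  then have "\<phi> v g (\<phi> v (fst p) (t (snd p) v)) = \<phi> v g e \<longleftrightarrow> \<phi> v (fst p) (t (snd p) v) = e"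
    if "snd p < N"
    using g e t[OF that v] by (meson action_closed inj_prop inj_on_eq_iff)
  then show "orbit_matrix \<phi> N t v (regn_action G g p) (\<phi> v g e) = orbit_matrix \<phi> N t v p e"
    using g \<open>fst p \<in> carrier G\<close> t v
    by (auto simp: orbit_matrix_def regn_action_def composition_rule)
qed

lemma tensor_map_orbit_matrix:
  fixes m :: nat
  assumes fin: "\<And>v. v < m \<Longrightarrow> finite (B v)" and c': "c' \<in> Pi\<^sub>E {..<m} (\<lambda>_. regn_basis G n)"
    and lt: "\<And>v. v < m \<Longrightarrow> snd (c' v) < N"
    and t: "\<And>v. v < m \<Longrightarrow> \<phi> v (fst (c' v)) (t (snd (c' v)) v) \<in> B v"
  shows "tensor_map m B (\<lambda>_. regn_basis G n) (orbit_matrix \<phi> N t) x c' =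
    x (\<lambda>v. if v < m then \<phi> v (fst (c' v)) (t (snd (c' v)) v) else undefined)"
proof -
  let ?c = "\<lambda>v. if v < m then \<phi> v (fst (c' v)) (t (snd (c' v)) v) else undefined"
  have c: "?c \<in> Pi\<^sub>E {..<m} B" using t by (auto simp: PiE_iff extensional_def)
  have "tensor_map m B (\<lambda>_. regn_basis G n) (orbit_matrix \<phi> N t) x c' =
      (\<Sum>c\<in>Pi\<^sub>E {..<m} B. (\<Prod>v<m. if ?c v = c v then 1 else 0) * x c)"
    using c' lt unfolding tensor_map_def by (auto intro!: sum.cong prod.cong simp: orbit_matrix_def)
  also have "\<dots> = x ?c" by (rule sum_PiE_delta[OF c fin])
  finally show ?thesis .
qed

text \<open>The equivariant extension of a matrix \<open>f\<close> given on the generators \<open>f\<^sub>i\<close>, \<open>i < r\<close>, of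
  \<open>K[G]\<^sup>n\<close>, vanishing on the other generators.\<close>

definition equivariant_lift :: "('g, 'z) monoid_scheme \<Rightarrow> ('g \<Rightarrow> 'b \<Rightarrow> 'b) \<Rightarrow> nat \<Rightarrow> (nat \<Rightarrow> 'b \<Rightarrow> 'k)
    \<Rightarrow> 'g \<times> nat \<Rightarrow> 'b \<Rightarrow> 'k::zero" where
  "equivariant_lift G \<phi> r f p e = (if snd p < r then f (snd p) (\<phi> (inv\<^bsub>G\<^esub> (fst p)) e) else 0)"

lemma (in group_action) equivariant_lift_regn_action:
  assumes "g \<in> carrier G" "p \<in> regn_basis G n" "e \<in> E"
  shows "equivariant_lift G \<phi> r f (regn_action G g p) (\<phi> g e) = equivariant_lift G \<phi> r f p e"
proof -
  interpret group G using group_hom group_hom.axioms(1) by blast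
  have h: "fst p \<in> carrier G" using assms(2) by (auto simp: regn_basis_def)
  have "\<phi> (inv (g \<otimes> fst p)) (\<phi> g e) = \<phi> (inv (fst p)) (\<phi> (inv g) (\<phi> g e))"
    using assms h by (simp add: inv_mult_group composition_rule action_closed)
  then show ?thesis
    using assms(1,3) by (simp add: equivariant_lift_def regn_action_def action_inv_cancel)
qed

section \<open>Points with all equivariant pushforwards in \<open>\<X>(T\<^sub>m)\<close>\<close>

locale pushforwards_in_model =
  fixes G :: "('g, 'z) monoid_scheme" (structure) and Br :: "'c set" and \<phi>r :: "'g \<Rightarrow> 'c \<Rightarrow> 'c"
    and m :: nat and Bl :: "nat \<Rightarrow> 'b set" and \<phi>l :: "nat \<Rightarrow> 'g \<Rightarrow> 'b \<Rightarrow> 'b"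
    and n :: nat and x :: "(nat \<Rightarrow> 'b) \<Rightarrow> 'k::field"
  assumes group: "group G" and fin_G: "finite (carrier G)"
    and card_G: "of_nat (card (carrier G)) \<noteq> (0 :: 'k)"
    and fin_Br: "finite Br" and Br_action: "group_action G Br \<phi>r"
    and fin_Bl: "\<And>v. v < m \<Longrightarrow> finite (Bl v)"
    and Bl_action: "\<And>v. v < m \<Longrightarrow> group_action G (Bl v) (\<phi>l v)"
    and card_Br: "card Br < n"
    and x_aff: "x \<in> aff_space (Pi\<^sub>E {..<m} Bl)"
    and pushforward: "\<And>M. equivariant_maps G m Bl \<phi>l (\<lambda>_. regn_basis G n) (\<lambda>_. regn_action G) M \<Longrightarrow>
      tensor_map m Bl (\<lambda>_. regn_basis G n) M x \<in>
        equivariant_model G Br \<phi>r m (\<lambda>_. regn_basis G n) (\<lambda>_. regn_action G)"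
begin

lemma invariant:
  assumes g: "g \<in> carrier G" and c: "c \<in> Pi\<^sub>E {..<m} Bl"
  shows "x (diag_action m \<phi>l g c) = x c"
proof -
  interpret group G by (rule group)
  define z where "z = tensor_map m Bl (\<lambda>_. regn_basis G n) (orbit_matrix \<phi>l 1 (\<lambda>_. c)) x"
  have z: "z \<in> equivariant_model G Br \<phi>r m (\<lambda>_. regn_basis G n) (\<lambda>_. regn_action G)"
    unfolding z_def using c Bl_action by (intro pushforward orbit_matrix_equivariant) auto
  define pt where "pt h = (\<lambda>v. if v < m then (h, 0 :: nat) else undefined)" for h :: 'g
  have pt: "pt h \<in> Pi\<^sub>E {..<m} (\<lambda>_. regn_basis G n)" if "h \<in> carrier G" for h
    using that card_Br by (auto simp: pt_def regn_basis_def PiE_iff extensional_def)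
  have z_pt: "z (pt h) = x (diag_action m \<phi>l h c)" if h: "h \<in> carrier G" for h
  proof -
    have "\<phi>l v h (c v) \<in> Bl v" if "v < m" for v
      using group_action.action_closed[OF Bl_action[OF that] h] c that by auto
    then have "z (pt h) = x (\<lambda>v. if v < m then \<phi>l v (fst (pt h v)) (c v) else undefined)"
      unfolding z_def using h by (subst tensor_map_orbit_matrix[OF fin_Bl pt]) (auto simp: pt_def)
    also have "\<dots> = x (diag_action m \<phi>l h c)"
      by (rule arg_cong[where f = x]) (auto simp: pt_def diag_action_def fun_eq_iff)
    finally show ?thesis .
  qed
  have "diag_action m (\<lambda>_. regn_action G) g (pt \<one>) = pt g"
    using g by (auto simp: diag_action_def pt_def regn_action_def)
  then have "z (pt g) = z (pt \<one>)"
    using equivariant_model_diag_invariant[OF z Br_action _ _ g pt[OF one_closed]] fin_G regn_action_closed[OF group g]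
    by (simp add: regn_basis_def)
  then show ?thesis using z_pt[OF g] z_pt[OF one_closed] diag_action_one[OF Bl_action c] by simp
qed

lemma invariant_fun_upd:
  assumes v: "v < m" and h: "h \<in> carrier G" and c: "c \<in> Pi\<^sub>E {..<m} Bl" and e: "e \<in> Bl v"
  shows "x (c(v := \<phi>l v h e)) = x ((diag_action m \<phi>l (inv h) c)(v := e))"
proof -
  interpret group_action G "Bl v" "\<phi>l v" by (rule Bl_action[OF v])
  have "c(v := \<phi>l v h e) \<in> Pi\<^sub>E {..<m} Bl"
    using c v action_closed[OF h e] by (auto simp: PiE_iff extensional_def)
  moreover have "diag_action m \<phi>l (inv h) (c(v := \<phi>l v h e)) = (diag_action m \<phi>l (inv h) c)(v := e)"
    using v h e by (auto simp: diag_action_def action_inv_cancel)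
  ultimately show ?thesis using invariant group h by (metis group.inv_closed)
qed

lemma flattening_minor_eq_0:
  assumes v: "v < m" and ds: "\<forall>i<Suc (card Br). ds i \<in> Bl v"
    and cs: "\<forall>j<Suc (card Br). cs j \<in> Pi\<^sub>E {..<m} Bl"
  shows "det (mat (Suc (card Br)) (Suc (card Br)) (\<lambda>(i, j). x ((cs j)(v := ds i)))) = 0"
proof -
  interpret group G by (rule group)
  let ?N = "Suc (card Br)"
  define t where "t i = (cs i)(v := ds i)" for i
  define z where "z = tensor_map m Bl (\<lambda>_. regn_basis G n) (orbit_matrix \<phi>l ?N t) x"
  have t: "t i w \<in> Bl w" if "i < ?N" "w < m" for i w
    using ds cs that by (auto simp: t_def)
  have z: "z \<in> equivariant_model G Br \<phi>r m (\<lambda>_. regn_basis G n) (\<lambda>_. regn_action G)"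
    unfolding z_def by (intro pushforward orbit_matrix_equivariant[OF Bl_action t])
  define cs' where "cs' j = (\<lambda>w. if w < m then (\<one>, j) else undefined)" for j :: nat
  define ds' where "ds' i = (\<one>, i)" for i :: nat
  have z_x: "z ((cs' j)(v := ds' i)) = x ((cs j)(v := ds i))" if ij: "i < ?N" "j < ?N" for i j
  proof -
    define c' where "c' = (cs' j)(v := ds' i)"
    have c': "c' \<in> Pi\<^sub>E {..<m} (\<lambda>_. regn_basis G n)"
      using ij v card_Br by (auto simp: c'_def cs'_def ds'_def regn_basis_def PiE_iff extensional_def)
    have lt: "snd (c' w) < ?N" if "w < m" for w
      using ij that by (simp add: c'_def cs'_def ds'_def)
    have one: "\<phi>l v \<one> (ds i) = ds i" "\<phi>l w \<one> (cs j w) = cs j w" if "w < m" for w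
      using group_action.action_one[OF Bl_action] ds cs ij v that by (auto simp: PiE_iff)
    have img: "(\<lambda>w. if w < m then \<phi>l w (fst (c' w)) (t (snd (c' w)) w) else undefined) = (cs j)(v := ds i)"
      using ij v cs one by (auto simp: c'_def cs'_def ds'_def t_def PiE_iff extensional_def fun_eq_iff)
    have mem: "\<phi>l w (fst (c' w)) (t (snd (c' w)) w) \<in> Bl w" if "w < m" for w
      using img t[OF lt[OF that] that] one that by (auto simp: fun_eq_iff c'_def cs'_def ds'_def t_def split: if_splits)
    have "z c' = x (\<lambda>w. if w < m then \<phi>l w (fst (c' w)) (t (snd (c' w)) w) else undefined)"
      unfolding z_def by (rule tensor_map_orbit_matrix[where \<phi> = \<phi>l and t = t, OF fin_Bl c' lt mem])
    then show ?thesis unfolding img by (simp add: c'_def)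
  qed
  have "det (mat ?N ?N (\<lambda>(i, j). z ((cs' j)(v := ds' i)))) = 0"
    using v card_Br
    by (intro equivariant_model_flattening_minor_eq_0[OF z fin_Br]) (auto simp: cs'_def ds'_def
        regn_basis_def PiE_iff extensional_def fin_G)
  moreover have "mat ?N ?N (\<lambda>(i, j). z ((cs' j)(v := ds' i))) = mat ?N ?N (\<lambda>(i, j). x ((cs j)(v := ds i)))"
    by (intro eq_matI) (auto simp: z_x)
  ultimately show ?thesis by simp
qed

lemma flattening_factorization:
  "\<exists>r L u. \<forall>v<m. r v \<le> card Br \<and> (\<forall>c\<in>Pi\<^sub>E {..<m} Bl. \<forall>e\<in>Bl v.
      x (c(v := e)) = (\<Sum>j<r v. (\<Sum>d\<in>Bl v. L v j d * x (c(v := d))) * u v j e))"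
proof -
  define F where "F v r u L \<longleftrightarrow> r \<le> card Br \<and> (\<forall>c\<in>Pi\<^sub>E {..<m} Bl. \<forall>e\<in>Bl v.
      x (c(v := e)) = (\<Sum>j<r. (\<Sum>d\<in>Bl v. L j d * x (c(v := d))) * u j e))" for v r u L
  have "\<exists>r u L. F v r u L" if "v < m" for v
    using vanishing_minors_imp_low_rank_factorization[OF fin_Bl[OF that], of "Suc (card Br)" "Pi\<^sub>E {..<m} Bl"
        "\<lambda>c e. x (c(v := e))"] flattening_minor_eq_0[OF that]
    unfolding F_def less_Suc_eq_le by blast
  then have "\<forall>v. \<exists>t. v < m \<longrightarrow> F v (fst t) (fst (snd t)) (snd (snd t))"
    by (metis fst_conv snd_conv)
  then obtain f where "\<forall>v. v < m \<longrightarrow> F v (fst (f v)) (fst (snd (f v))) (snd (snd (f v)))"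
    by (metis choice)
  then have "\<forall>v<m. F v ((fst \<circ> f) v) ((fst \<circ> snd \<circ> f) v) ((snd \<circ> snd \<circ> f) v)" by simp
  then show ?thesis unfolding F_def by blast
qed

lemma invariant_sum_reindex:
  assumes v: "v < m" and h: "h \<in> carrier G" and c: "c \<in> Pi\<^sub>E {..<m} Bl"
  shows "(\<Sum>e\<in>Bl v. f (\<phi>l v (inv h) e) * x (c(v := e))) =
    (\<Sum>e\<in>Bl v. f e * x ((diag_action m \<phi>l (inv h) c)(v := e)))"
proof -
  interpret Bv: group_action G "Bl v" "\<phi>l v" by (rule Bl_action[OF v])
  have "(\<Sum>e\<in>Bl v. f (\<phi>l v (inv h) e) * x (c(v := e))) =
      (\<Sum>e\<in>Bl v. f (\<phi>l v (inv h) (\<phi>l v h e)) * x (c(v := \<phi>l v h e)))"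
    by (rule Bv.sum_action_reindex[OF h, symmetric])
  also have "\<dots> = (\<Sum>e\<in>Bl v. f e * x ((diag_action m \<phi>l (inv h) c)(v := e)))"
    using h c v by (intro sum.cong refl) (simp add: Bv.action_inv_cancel invariant_fun_upd)
  finally show ?thesis .
qed

text \<open>Averaging over \<open>G\<close> makes a rank factorisation of the flattening at leaf \<open>v\<close> equivariant
  without breaking the reproduction of \<open>x\<close>, because \<open>x\<close> is invariant: each \<open>G\<close>-orbit of
  generators of \<open>K[G]\<^sup>n\<close> contributes \<open>1 / |G|\<close> of it.\<close>

lemma averaged_reproduction_orbit:
  assumes r: "r \<le> card Br" and v: "v < m"
    and factor: "\<And>c e. c \<in> Pi\<^sub>E {..<m} Bl \<Longrightarrow> e \<in> Bl v \<Longrightarrow>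
      x (c(v := e)) = (\<Sum>j<r. (\<Sum>d\<in>Bl v. L j d * x (c(v := d))) * u j e)"
    and c: "c \<in> Pi\<^sub>E {..<m} Bl" and d: "d \<in> Bl v" and h: "h \<in> carrier G"
  shows "(\<Sum>i<n. equivariant_lift G (\<phi>l v) r u (h, i) d * (\<Sum>e\<in>Bl v.
      equivariant_lift G (\<phi>l v) r (\<lambda>j e. L j e / of_nat (card (carrier G))) (h, i) e * x (c(v := e)))) =
    x (c(v := d)) / of_nat (card (carrier G))"
    (is "?lhs = _ / ?cg")
proof -
  interpret group G by (rule group)
  let ?C = "diag_action m \<phi>l (inv h) c"
  have C: "?C \<in> Pi\<^sub>E {..<m} Bl"
    using c h group_action.action_closed[OF Bl_action] by (intro diag_action_PiE) auto
  have "?lhs = (\<Sum>i<r. u i (\<phi>l v (inv h) d) * (\<Sum>e\<in>Bl v. L i (\<phi>l v (inv h) e) * x (c(v := e)))) / ?cg"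
    using r card_Br unfolding sum_divide_distrib
    by (intro sum.mono_neutral_cong_right)
      (auto simp: equivariant_lift_def sum_divide_distrib[symmetric] sum_distrib_left)
  also have "\<dots> = (\<Sum>i<r. (\<Sum>e\<in>Bl v. L i e * x (?C(v := e))) * u i (\<phi>l v (inv h) d)) / ?cg"
    unfolding invariant_sum_reindex[OF v h c] by (simp add: mult.commute)
  also have "(\<Sum>i<r. (\<Sum>e\<in>Bl v. L i e * x (?C(v := e))) * u i (\<phi>l v (inv h) d)) =
      x (?C(v := \<phi>l v (inv h) d))"
    using factor[OF C group_action.action_closed[OF Bl_action[OF v] inv_closed[OF h] d]] by simp
  also have "?C(v := \<phi>l v (inv h) d) = diag_action m \<phi>l (inv h) (c(v := d))"
    using v by (auto simp: diag_action_def)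
  also have "x (diag_action m \<phi>l (inv h) (c(v := d))) = x (c(v := d))"
    using c v d h by (intro invariant) (auto simp: PiE_iff extensional_def)
  finally show ?thesis .
qed

lemma averaged_reproduction:
  assumes r: "r \<le> card Br" and v: "v < m"
    and factor: "\<And>c e. c \<in> Pi\<^sub>E {..<m} Bl \<Longrightarrow> e \<in> Bl v \<Longrightarrow>
      x (c(v := e)) = (\<Sum>j<r. (\<Sum>d\<in>Bl v. L j d * x (c(v := d))) * u j e)"
    and c: "c \<in> Pi\<^sub>E {..<m} Bl" and d: "d \<in> Bl v"
  shows "(\<Sum>e\<in>Bl v. (\<Sum>p\<in>regn_basis G n. equivariant_lift G (\<phi>l v) r u p d *
      equivariant_lift G (\<phi>l v) r (\<lambda>j e. L j e / of_nat (card (carrier G))) p e) * x (c(v := e))) =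
    x (c(v := d))"
proof -
  let ?\<phi> = "equivariant_lift G (\<phi>l v) r (\<lambda>j e. L j e / of_nat (card (carrier G)))"
  let ?\<psi> = "equivariant_lift G (\<phi>l v) r u"
  have "(\<Sum>e\<in>Bl v. (\<Sum>p\<in>regn_basis G n. ?\<psi> p d * ?\<phi> p e) * x (c(v := e))) =
      (\<Sum>p\<in>regn_basis G n. ?\<psi> p d * (\<Sum>e\<in>Bl v. ?\<phi> p e * x (c(v := e))))"
    by (simp add: sum_distrib_left sum_distrib_right mult.assoc sum.swap[of _ "Bl v"])
  also have "\<dots> = (\<Sum>h\<in>carrier G. \<Sum>i<n. ?\<psi> (h, i) d * (\<Sum>e\<in>Bl v. ?\<phi> (h, i) e * x (c(v := e))))"
    unfolding regn_basis_def by (simp add: sum.cartesian_product case_prod_unfold)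
  also have "\<dots> = (\<Sum>h\<in>carrier G. x (c(v := d)) / of_nat (card (carrier G)))"
    by (rule sum.cong[OF refl]) (rule averaged_reproduction_orbit[OF r v factor c d])
  also have "\<dots> = x (c(v := d))" using card_G by simp
  finally show ?thesis .
qed

lemma in_equivariant_model: "x \<in> equivariant_model G Br \<phi>r m Bl \<phi>l"
proof -
  obtain r L u where factorization: "\<forall>v<m. r v \<le> card Br \<and> (\<forall>c\<in>Pi\<^sub>E {..<m} Bl. \<forall>e\<in>Bl v.
      x (c(v := e)) = (\<Sum>j<r v. (\<Sum>d\<in>Bl v. L v j d * x (c(v := d))) * u v j e))"
    using flattening_factorization by blast
  define \<phi> where "\<phi> v = equivariant_lift G (\<phi>l v) (r v) (\<lambda>j e. L v j e / of_nat (card (carrier G)))" for v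
  define \<psi> where "\<psi> v e p = equivariant_lift G (\<phi>l v) (r v) (u v) p e" for v e p
  have \<phi>: "equivariant_maps G m Bl \<phi>l (\<lambda>_. regn_basis G n) (\<lambda>_. regn_action G) \<phi>"
    unfolding equivariant_maps_def \<phi>_def using group_action.equivariant_lift_regn_action[OF Bl_action] by blast
  have \<psi>: "equivariant_maps G m (\<lambda>_. regn_basis G n) (\<lambda>_. regn_action G) Bl \<phi>l \<psi>"
    unfolding equivariant_maps_def \<psi>_def using group_action.equivariant_lift_regn_action[OF Bl_action] by blast
  have fin_RB: "finite (regn_basis G n)" using fin_G by (simp add: regn_basis_def)
  have "tensor_map m (\<lambda>_. regn_basis G n) Bl \<psi> (tensor_map m Bl (\<lambda>_. regn_basis G n) \<phi> x) =
      tensor_map m Bl Bl (\<lambda>v d e. \<Sum>p\<in>regn_basis G n. \<psi> v d p * \<phi> v p e) x"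
    by (rule tensor_map_tensor_map) (rule fin_RB)
  also have "\<dots> = x"
  proof (rule tensor_map_fixed[OF fin_Bl x_aff])
    fix v c assume v: "v < m" and c: "c \<in> Pi\<^sub>E {..<m} Bl"
    have "r v \<le> card Br" and factor: "\<And>c e. c \<in> Pi\<^sub>E {..<m} Bl \<Longrightarrow> e \<in> Bl v \<Longrightarrow>
        x (c(v := e)) = (\<Sum>j<r v. (\<Sum>d\<in>Bl v. L v j d * x (c(v := d))) * u v j e)"
      using factorization v by auto
    moreover have "c v \<in> Bl v" using v c by auto
    ultimately have "(\<Sum>e\<in>Bl v. (\<Sum>p\<in>regn_basis G n. equivariant_lift G (\<phi>l v) (r v) (u v) p (c v) *
        equivariant_lift G (\<phi>l v) (r v) (\<lambda>j e. L v j e / of_nat (card (carrier G))) p e) * x (c(v := e))) =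
      x (c(v := c v))"
      by (intro averaged_reproduction[OF _ v _ c]) auto
    then show "(\<Sum>e\<in>Bl v. (\<Sum>p\<in>regn_basis G n. \<psi> v (c v) p * \<phi> v p e) * x (c(v := e))) = x c"
      by (simp add: \<phi>_def \<psi>_def)
  qed
  finally have "tensor_map m (\<lambda>_. regn_basis G n) Bl \<psi> (tensor_map m Bl (\<lambda>_. regn_basis G n) \<phi> x) = x" .
  moreover have "tensor_map m (\<lambda>_. regn_basis G n) Bl \<psi> (tensor_map m Bl (\<lambda>_. regn_basis G n) \<phi> x) \<in>
      equivariant_model G Br \<phi>r m Bl \<phi>l"
    using fin_RB fin_Bl regn_action_bij[OF group]
    by (intro tensor_map_equivariant_model[OF _ _ _ \<psi> pushforward[OF \<phi>]]) auto
  ultimately show ?thesis by simp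
qed

end

lemma equivariant_model_iff_pushforwards:
  fixes G :: "('g, 'z) monoid_scheme" and x :: "(nat \<Rightarrow> 'b) \<Rightarrow> 'k::field"
  assumes "group G" "finite (carrier G)" "of_nat (card (carrier G)) \<noteq> (0 :: 'k)"
    and "finite Br" "group_action G Br \<phi>r"
    and fin_Bl: "\<And>v. v < m \<Longrightarrow> finite (Bl v)" and Bl_action: "\<And>v. v < m \<Longrightarrow> group_action G (Bl v) (\<phi>l v)"
    and "card Br < n" "x \<in> aff_space (Pi\<^sub>E {..<m} Bl)"
  shows "x \<in> equivariant_model G Br \<phi>r m Bl \<phi>l \<longleftrightarrow>
    (\<forall>M. equivariant_maps G m Bl \<phi>l (\<lambda>_. regn_basis G n) (\<lambda>_. regn_action G) M \<longrightarrow>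
      tensor_map m Bl (\<lambda>_. regn_basis G n) M x \<in>
        equivariant_model G Br \<phi>r m (\<lambda>_. regn_basis G n) (\<lambda>_. regn_action G))"
    (is "_ \<longleftrightarrow> ?pushforwards")
proof
  assume "x \<in> equivariant_model G Br \<phi>r m Bl \<phi>l"
  then show ?pushforwards
    using assms(2) fin_Bl group_action.action_bij[OF Bl_action]
    by (intro allI impI tensor_map_equivariant_model[of m Bl "\<lambda>_. regn_basis G n" G \<phi>l])
      (simp_all add: regn_basis_def)
next
  assume ?pushforwards
  then interpret pushforwards_in_model G Br \<phi>r m Bl \<phi>l n x
    using assms by (intro pushforwards_in_model.intro) simp_all
  show "x \<in> equivariant_model G Br \<phi>r m Bl \<phi>l" by (rule in_equivariant_model)
qed

lemma equivariant_model_eq_zero_set_pullback_polys: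
  fixes G :: "('g, 'z) monoid_scheme" and Bl :: "nat \<Rightarrow> 'b set"
    and P :: "(((nat \<Rightarrow> 'g \<times> nat) \<Rightarrow> nat) \<Rightarrow> 'k::field) set"
  assumes "group G" "finite (carrier G)" "of_nat (card (carrier G)) \<noteq> (0 :: 'k)"
    and "finite Br" "group_action G Br \<phi>r"
    and fin_Bl: "\<And>v. v < m \<Longrightarrow> finite (Bl v)" and "\<And>v. v < m \<Longrightarrow> group_action G (Bl v) (\<phi>l v)"
    and "card Br < n"
    and P: "\<forall>p\<in>P. mpoly_deg_le (Pi\<^sub>E {..<m} (\<lambda>_. regn_basis G n)) D p"
    and Xm: "equivariant_model G Br \<phi>r m (\<lambda>_. regn_basis G n) (\<lambda>_. regn_action G) =
      zero_set (Pi\<^sub>E {..<m} (\<lambda>_. regn_basis G n)) P"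
  shows "equivariant_model G Br \<phi>r m Bl \<phi>l = zero_set (Pi\<^sub>E {..<m} Bl) (pullback_polys m Bl (\<lambda>_. regn_basis G n)
    {M. equivariant_maps G m Bl \<phi>l (\<lambda>_. regn_basis G n) (\<lambda>_. regn_action G) M} D P)"
proof -
  let ?Im = "Pi\<^sub>E {..<m} (\<lambda>_. regn_basis G n)"
  let ?Ms = "{M :: nat \<Rightarrow> 'g \<times> nat \<Rightarrow> 'b \<Rightarrow> 'k. equivariant_maps G m Bl \<phi>l (\<lambda>_. regn_basis G n) (\<lambda>_. regn_action G) M}"
  have fin_regn: "\<And>v. v < m \<Longrightarrow> finite (regn_basis G n)" using assms(2) by (simp add: regn_basis_def)
  have "x \<in> equivariant_model G Br \<phi>r m Bl \<phi>l \<longleftrightarrow>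
      x \<in> zero_set (Pi\<^sub>E {..<m} Bl) (pullback_polys m Bl (\<lambda>_. regn_basis G n) ?Ms D P)"
    for x :: "(nat \<Rightarrow> 'b) \<Rightarrow> 'k"
  proof (cases "x \<in> aff_space (Pi\<^sub>E {..<m} Bl)")
    case True
    have "x \<in> equivariant_model G Br \<phi>r m Bl \<phi>l \<longleftrightarrow>
        (\<forall>M\<in>?Ms. tensor_map m Bl (\<lambda>_. regn_basis G n) M x \<in> zero_set ?Im P)"
      using equivariant_model_iff_pushforwards[of G Br \<phi>r m Bl \<phi>l n x, OF assms(1-8) True] by (simp add: Xm)
    moreover have "x \<in> zero_set (Pi\<^sub>E {..<m} Bl) (pullback_polys m Bl (\<lambda>_. regn_basis G n) ?Ms D P) \<longleftrightarrow>
        (\<forall>M\<in>?Ms. tensor_map m Bl (\<lambda>_. regn_basis G n) M x \<in> zero_set ?Im P)"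
      using zero_set_pullback_polys[where x = x and Ms = ?Ms, OF P fin_Bl fin_regn] True by simp
    ultimately show ?thesis by simp
  next
    case False
    then show ?thesis using equivariant_model_subset_aff_space[of G Br \<phi>r m Bl \<phi>l]
      by (auto simp: zero_set_def)
  qed
  then show ?thesis by (simp add: set_eq_iff)
qed

theorem lemma6p6:
  fixes G :: "('g, 'z) monoid_scheme"
    and Br :: "'c set" and phir :: "'g \<Rightarrow> 'c \<Rightarrow> 'c"
    and m :: nat and Bl :: "nat \<Rightarrow> 'b set" and phil :: "nat \<Rightarrow> 'g \<Rightarrow> 'b \<Rightarrow> 'b"
    and k n D :: nat
  assumes "comm_group G" and "finite (carrier G)"
    and "infinite (UNIV :: 'k::field set)"
    and "\<And>d (\<rho> :: 'g \<Rightarrow> nat \<Rightarrow> nat \<Rightarrow> 'k). is_mat_rep G d \<rho> \<Longrightarrow> splits_1dim G d \<rho>"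
    and "finite Br" and "card Br = k" and "group_action G Br phir"
    and "\<And>v. v < m \<Longrightarrow> finite (Bl v)"
    and "\<And>v. v < m \<Longrightarrow> group_action G (Bl v) (phil v)"
    and "n > k"
    and "defined_by_deg_le (Pi\<^sub>E {..<m} (\<lambda>_. regn_basis G n))
           (equivariant_model G Br phir m (\<lambda>_. regn_basis G n) (\<lambda>_. regn_action G)
              :: ((nat \<Rightarrow> 'g \<times> nat) \<Rightarrow> 'k) set) D"
  shows "defined_by_deg_le (Pi\<^sub>E {..<m} Bl)
           (equivariant_model G Br phir m Bl phil :: ((nat \<Rightarrow> 'b) \<Rightarrow> 'k) set) D"
proof -
  have G: "group G" using assms(1) by (rule comm_group.axioms(2))
  have card_G: "of_nat (card (carrier G)) \<noteq> (0 :: 'k)"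
    by (rule group.of_nat_card_carrier_neq_0[OF G assms(2,4)])
  obtain P :: "(((nat \<Rightarrow> 'g \<times> nat) \<Rightarrow> nat) \<Rightarrow> 'k) set"
    where P: "\<forall>p\<in>P. mpoly_deg_le (Pi\<^sub>E {..<m} (\<lambda>_. regn_basis G n)) D p"
      and Xm: "equivariant_model G Br phir m (\<lambda>_. regn_basis G n) (\<lambda>_. regn_action G) =
        zero_set (Pi\<^sub>E {..<m} (\<lambda>_. regn_basis G n)) P"
    using assms(11) unfolding defined_by_deg_le_def by blast
  have "equivariant_model G Br phir m Bl phil = zero_set (Pi\<^sub>E {..<m} Bl) (pullback_polys m Bl
      (\<lambda>_. regn_basis G n) {M. equivariant_maps G m Bl phil (\<lambda>_. regn_basis G n) (\<lambda>_. regn_action G) M} D P)"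
    (is "_ = zero_set _ ?Q")
    by (rule equivariant_model_eq_zero_set_pullback_polys) (use G card_G P Xm assms in auto)
  moreover have "\<forall>q\<in>?Q. mpoly_deg_le (Pi\<^sub>E {..<m} Bl) D q" by (simp add: pullback_polys_def)
  ultimately show ?thesis unfolding defined_by_deg_le_def by (intro exI conjI)
qed

end
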